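(* Consider an instance of the capacitated facility location problem with facilities $F=\{1,\ldots,m\}$ (opening cost $f_i\ge 0$, capacity $U_i$), clients $D=\{1,\ldots,n\}$ (demand $d_j>0$), and per-unit transportation costs $c_{ij}\in\mathbb{R}_{\ge 0}\cup\{\infty\}$ obeying the Monge property $c_{hj}+c_{ik}\le c_{hk}+c_{ij}$ for all $1\le h<i\le m$, $1\le j<k\le n$. For $i\in F$, $j\in D$, $0\le d\le d_j$, let $C(i,j,d)$ denote the optimal cost of the subinstance using only facilities $i,\ldots,m$ and clients $j,\ldots,n$, where client $j$ has only $d$ units of demand. Define the values computed by the dynamic program by the base cases $C(m+1,j,d)=\infty$ if $d+\sum_{k=j+1}^n d_k>0$, $C(i,n+1,0)=0$, and the recurrence $$C(i,j,d)=\min\Big(C(i+1,j,d),\; f_i+\min_{u:\,1\le u\le \min(U_i,\,d+\sum_{k=j+1}^n d_k)}\big(\mathrm{TC}(i,u,j,d)+C(i+1,\mathrm{NC}(i,u,j,d),\mathrm{DR}(i,u,j,d))\big)\Big),$$ where, when facility $i$ greedily serves $u$ units starting with the $d$ units at client $j$ and then clients $j+1,j+2,\ldots$: $\mathrm{NC}(i,u,j,d)=\ell$ is the first index $\ell\ge j$ with $d+\sum_{k=j+1}^{\ell}d_k>u$; $\mathrm{DR}(i,u,j,d)=d'$ is the demand left at client $\ell$, namely $d'=d_\ell-(u-(d+\sum_{k=j+1}^{\ell-1}d_k))$ if $\ell>j$ and $d'=d-u$ if $\ell=j$; and $\mathrm{TC}(i,u,j,d)$ is the transportation cost of this greedy assignment,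 equal to $c_{ij}(d-d')$ if $\ell=j$ and to $c_{ij}d+\sum_{k=j+1}^{\ell-1}c_{ik}d_k+c_{i\ell}(d_\ell-d')$ otherwise. Then this dynamic program correctly computes the optimal cost $C(i,j,d)$ (in particular, $C(1,1,d_1)$ is the optimal cost of the instance).
   Context: Capacitated facility location: choose open facilities $F'$ and fractional assignment $x_{ij}\in[0,1]$ with $\sum_i x_{ij}=1$, $\sum_j x_{ij}d_j\le U_i$, $x_{ij}>0$ only for $i\in F'$, minimizing $\sum_{i\in F'}f_i+\sum_{i,j}c_{ij}d_jx_{ij}$. All finite input numbers are integers; $a+\infty=\infty$. *)

theory Defs
  imports Main "HOL-Library.Extended_Real"
begin

definition rest :: "nat \<Rightarrow> (nat \<Rightarrow> nat) \<Rightarrow> nat \<Rightarrow> nat \<Rightarrow> nat" where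
  "rest n dem j d = d + (\<Sum>k\<in>{Suc j..n}. dem k)"

(* NC: first index l >= j with d + sum_{k=j+1}^l d_k > u; the index n+1 (convention d_{n+1}=0)
   is used when u equals all the remaining demand *)
definition NC :: "nat \<Rightarrow> (nat \<Rightarrow> nat) \<Rightarrow> nat \<Rightarrow> nat \<Rightarrow> nat \<Rightarrow> nat" where
  "NC n dem u j d = (LEAST l. j \<le> l \<and> (n < l \<or> u < d + (\<Sum>k\<in>{Suc j..l}. dem k)))"

definition DR :: "nat \<Rightarrow> (nat \<Rightarrow> nat) \<Rightarrow> nat \<Rightarrow> nat \<Rightarrow> nat \<Rightarrow> nat" where
  "DR n dem u j d = (let l = NC n dem u j d in
     if l = j then d - u
     else if l \<le> n then dem l - (u - (d + (\<Sum>k\<in>{Suc j..l - 1}. dem k)))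
     else 0)"

definition TC :: "nat \<Rightarrow> (nat \<Rightarrow> nat) \<Rightarrow> (nat \<Rightarrow> nat \<Rightarrow> enat) \<Rightarrow> nat \<Rightarrow> nat \<Rightarrow> nat \<Rightarrow> nat \<Rightarrow> enat" where
  "TC n dem c i u j d = (let l = NC n dem u j d; d' = DR n dem u j d in
     if l = j then c i j * enat (d - d')
     else c i j * enat d + (\<Sum>k\<in>{Suc j..l - 1}. c i k * enat (dem k))
          + (if l \<le> n then c i l * enat (dem l - d') else 0))"

definition cfl_feasible ::
  "nat set \<Rightarrow> nat set \<Rightarrow> (nat \<Rightarrow> nat) \<Rightarrow> (nat \<Rightarrow> nat) \<Rightarrow> nat set \<Rightarrow> (nat \<Rightarrow> nat \<Rightarrow> real) \<Rightarrow> bool" where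
  "cfl_feasible fac cl dem U Fo x \<longleftrightarrow>
     Fo \<subseteq> fac \<and>
     (\<forall>a\<in>fac. \<forall>k\<in>cl. 0 \<le> x a k \<and> x a k \<le> 1) \<and>
     (\<forall>k\<in>cl. (\<Sum>a\<in>fac. x a k) = 1) \<and>
     (\<forall>a\<in>fac. (\<Sum>k\<in>cl. x a k * real (dem k)) \<le> real (U a)) \<and>
     (\<forall>a\<in>fac. \<forall>k\<in>cl. 0 < x a k \<longrightarrow> a \<in> Fo)"

definition cfl_cost ::
  "nat set \<Rightarrow> nat set \<Rightarrow> (nat \<Rightarrow> nat) \<Rightarrow> (nat \<Rightarrow> nat) \<Rightarrow> (nat \<Rightarrow> nat \<Rightarrow> enat) \<Rightarrow> nat set \<Rightarrow> (nat \<Rightarrow> nat \<Rightarrow> real) \<Rightarrow> ereal" where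
  "cfl_cost fac cl dem f c Fo x =
     (\<Sum>a\<in>Fo. ereal (real (f a))) +
     (\<Sum>a\<in>fac. \<Sum>k\<in>cl. ereal_of_enat (c a k) * ereal (real (dem k) * x a k))"

(* optimal cost; Inf {} = \<infinity> if infeasible *)
definition cfl_opt ::
  "nat set \<Rightarrow> nat set \<Rightarrow> (nat \<Rightarrow> nat) \<Rightarrow> (nat \<Rightarrow> nat) \<Rightarrow> (nat \<Rightarrow> nat) \<Rightarrow> (nat \<Rightarrow> nat \<Rightarrow> enat) \<Rightarrow> ereal" where
  "cfl_opt fac cl dem f U c =
     Inf {cfl_cost fac cl dem f c Fo x | Fo x. cfl_feasible fac cl dem U Fo x}"

(* subinstance: facilities i..m, clients j..n, client j has demand d
   (client j is absent if d = 0) *)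
definition sub_dem :: "(nat \<Rightarrow> nat) \<Rightarrow> nat \<Rightarrow> nat \<Rightarrow> nat \<Rightarrow> nat" where
  "sub_dem dem j d = (\<lambda>k. if k = j then d else dem k)"

definition sub_clients :: "nat \<Rightarrow> nat \<Rightarrow> nat \<Rightarrow> nat set" where
  "sub_clients n j d = {k. j \<le> k \<and> k \<le> n \<and> (k = j \<longrightarrow> 0 < d)}"

definition sub_opt ::
  "nat \<Rightarrow> nat \<Rightarrow> (nat \<Rightarrow> nat) \<Rightarrow> (nat \<Rightarrow> nat) \<Rightarrow> (nat \<Rightarrow> nat) \<Rightarrow> (nat \<Rightarrow> nat \<Rightarrow> enat)
     \<Rightarrow> nat \<Rightarrow> nat \<Rightarrow> nat \<Rightarrow> ereal" where
  "sub_opt m n dem f U c i j d = cfl_opt {i..m} (sub_clients n j d) (sub_dem dem j d) f U c"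

end

theory Submission
  imports Defs
begin

text \<open>
  Put the clients on a line, client \<open>k\<close> occupying the interval \<open>[cum (k - 1), cum k]\<close> of
  length \<open>d\<^sub>k\<close>. The subinstance \<open>(i, j, d)\<close> is then the segment \<open>[cum j - d, total]\<close> served by
  facilities \<open>i..m\<close>, and the greedy quantities \<open>NC\<close>, \<open>DR\<close>, \<open>TC\<close> describe facility \<open>i\<close> serving
  the next \<open>u\<close> units of the segment. So the recursion is a dynamic program \<open>dp i p\<close> over integer
  positions \<open>p\<close>, and every value of it is the cost of a solution serving contiguous segments.

  Conversely, take any fractional solution on \<open>[s, total]\<close> in which facility \<open>i\<close> serves
  \<open>u\<close> units. By the Monge property its flow can be exchanged with that of the later facilities so
  that it serves exactly the segment \<open>[s, s + u]\<close>, without increasing the cost. As \<open>s + u\<close> need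
  not be an integer, the induction over facilities bounds the cost from below by the piecewise
  linear interpolation of \<open>dp i\<close>; one step of the recursion survives interpolation by coupling
  the two neighbouring integer positions of \<open>s\<close> monotonically with those of \<open>s + u\<close>.
\<close>

text \<open>The junk value \<open>real_of_enat \<infinity> = 0\<close> never matters below: positive flow is only sent along
  finite costs.\<close>

definition real_of_enat :: "enat \<Rightarrow> real" where
  "real_of_enat x = real_of_ereal (ereal_of_enat x)"

lemma real_of_enat_enat [simp]: "real_of_enat (enat n) = real n"
  by (simp add: real_of_enat_def)

lemma ereal_of_enat_eq_real_of_enat: "x \<noteq> \<infinity> \<Longrightarrow> ereal_of_enat x = ereal (real_of_enat x)"
  by (cases x) (auto simp: real_of_enat_def)

text \<open>The monotone coupling of the distributions \<open>(1 - \<theta>, \<theta>)\<close> and \<open>(1 - \<theta>', \<theta>')\<close> on two points: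
  the hypotheses bound the transitions \<open>0 \<mapsto> 0\<close>, \<open>1 \<mapsto> 1\<close>, \<open>1 \<mapsto> 0\<close> and \<open>0 \<mapsto> 1\<close>.\<close>

lemma convex_coupling_le:
  fixes \<theta> \<theta>' F q0 q1 g0 g1 h0 h1 r0 r1 :: real
  assumes "0 \<le> \<theta>" "\<theta> \<le> 1" "0 \<le> \<theta>'" "\<theta>' \<le> 1"
    and c00: "q0 \<le> F + (h0 - g0) + r0"
    and c11: "0 < \<theta> \<Longrightarrow> 0 < \<theta>' \<Longrightarrow> q1 \<le> F + (h1 - g1) + r1"
    and c10: "\<theta>' < \<theta> \<Longrightarrow> q1 \<le> F + (h0 - g1) + r0"
    and c01: "\<theta> < \<theta>' \<Longrightarrow> q0 \<le> F + (h1 - g0) + r1"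
  shows "(1 - \<theta>) * q0 + \<theta> * q1
    \<le> F + (((1 - \<theta>') * h0 + \<theta>' * h1) - ((1 - \<theta>) * g0 + \<theta> * g1)) + ((1 - \<theta>') * r0 + \<theta>' * r1)"
proof (cases "\<theta>' \<le> \<theta>")
  case True
  have "(1 - \<theta>) * q0 \<le> (1 - \<theta>) * (F + (h0 - g0) + r0)"
    using c00 assms(2) by (simp add: mult_left_mono)
  moreover have "\<theta>' * q1 \<le> \<theta>' * (F + (h1 - g1) + r1)"
    using c11 True assms(3) by (cases "\<theta>' = 0") (simp_all add: mult_left_mono)
  moreover have "(\<theta> - \<theta>') * q1 \<le> (\<theta> - \<theta>') * (F + (h0 - g1) + r0)"
    using c10 True by (cases "\<theta>' = \<theta>") (simp_all add: mult_left_mono)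
  ultimately have "(1 - \<theta>) * q0 + \<theta>' * q1 + (\<theta> - \<theta>') * q1 \<le> (1 - \<theta>) * (F + (h0 - g0) + r0)
      + \<theta>' * (F + (h1 - g1) + r1) + (\<theta> - \<theta>') * (F + (h0 - g1) + r0)"
    by linarith
  then show ?thesis by (simp add: algebra_simps)
next
  case False
  have "(1 - \<theta>') * q0 \<le> (1 - \<theta>') * (F + (h0 - g0) + r0)"
    using c00 assms(4) by (simp add: mult_left_mono)
  moreover have "\<theta> * q1 \<le> \<theta> * (F + (h1 - g1) + r1)"
    using c11 False assms(1) by (cases "\<theta> = 0") (simp_all add: mult_left_mono)
  moreover have "(\<theta>' - \<theta>) * q0 \<le> (\<theta>' - \<theta>) * (F + (h1 - g0) + r1)"
    using c01 False by (simp add: mult_left_mono)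
  ultimately have "(1 - \<theta>') * q0 + \<theta> * q1 + (\<theta>' - \<theta>) * q0 \<le> (1 - \<theta>') * (F + (h0 - g0) + r0)
      + \<theta> * (F + (h1 - g1) + r1) + (\<theta>' - \<theta>) * (F + (h1 - g0) + r1)"
    by linarith
  then show ?thesis by (simp add: algebra_simps)
qed

lemma nat_floor_add_frac: "0 \<le> s \<Longrightarrow> real (nat \<lfloor>s\<rfloor>) + frac s = s"
  by (simp add: frac_def)

section \<open>An exchange lemma for Monge costs\<close>

text \<open>Facility \<open>i\<close> (costs \<open>ci\<close>) changes its flow from \<open>cur\<close> to \<open>tgt\<close> of the same total. What it
  gains at a client is taken from the facilities in \<open>A\<close> in proportion to their flow there; they
  absorb what \<open>i\<close> releases in proportion to the releases. Since every gain precedes every release,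
  each swap is paid for by the Monge inequality.\<close>

locale monge_exchange =
  fixes A :: "'a set" and K :: "nat set"
    and cur tgt ci :: "nat \<Rightarrow> real" and y ca :: "'a \<Rightarrow> nat \<Rightarrow> real"
  assumes finite_K: "finite K"
    and tgt_nonneg: "\<forall>k\<in>K. 0 \<le> tgt k"
    and y_nonneg: "\<forall>a\<in>A. \<forall>k\<in>K. 0 \<le> y a k"
    and balanced: "(\<Sum>k\<in>K. tgt k) = (\<Sum>k\<in>K. cur k)"
    and room: "\<forall>k\<in>K. tgt k - cur k \<le> (\<Sum>a\<in>A. y a k)"
    and gain_before_release: "\<forall>k\<in>K. \<forall>k'\<in>K. cur k < tgt k \<longrightarrow> tgt k' < cur k' \<longrightarrow> k < k'"
    and monge: "\<forall>a\<in>A. \<forall>k\<in>K. \<forall>k'\<in>K. k < k' \<longrightarrow> 0 < y a k \<longrightarrow> 0 < cur k' \<longrightarrow>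
                cur k < tgt k \<longrightarrow> tgt k' < cur k' \<longrightarrow> ci k + ca a k' \<le> ci k' + ca a k"
begin

text \<open>Where \<open>others k = 0\<close> or \<open>moved = 0\<close>, division by zero yields \<open>0\<close>, harmlessly: then
  \<open>gain k = 0\<close>, respectively nothing is moved at all.\<close>

definition "gain k = max (tgt k - cur k) 0"
definition "release k = max (cur k - tgt k) 0"
definition "others k = (\<Sum>a\<in>A. y a k)"
definition "moved = (\<Sum>k\<in>K. gain k)"
definition "taken a = (\<Sum>k\<in>K. gain k * y a k / others k)"
definition "transfer k k' a = gain k * y a k / others k * (release k' / moved)"
definition "y_new a k = y a k - gain k * y a k / others k + release k * taken a / moved"

lemma gain_nonneg: "0 \<le> gain k" and release_nonneg: "0 \<le> release k"
  by (auto simp: gain_def release_def)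

lemma others_nonneg: "k \<in> K \<Longrightarrow> 0 \<le> others k"
  unfolding others_def using y_nonneg by (auto intro: sum_nonneg)

lemma gain_le_others: "k \<in> K \<Longrightarrow> gain k \<le> others k"
  using room others_nonneg unfolding gain_def others_def by auto

lemma gain_times_shares: assumes "k \<in> K" shows "gain k * (\<Sum>a\<in>A. y a k / others k) = gain k"
proof (cases "others k = 0")
  case True then show ?thesis using gain_le_others[OF assms] gain_nonneg[of k] by simp
next
  case False
  have "(\<Sum>a\<in>A. y a k / others k) = (\<Sum>a\<in>A. y a k) / others k"
    by (simp add: sum_divide_distrib)
  also have "\<dots> = others k / others k" by (simp add: others_def)
  finally show ?thesis using False by simp
qed

lemma sum_gain_eq_sum_release: "(\<Sum>k\<in>K. gain k) = (\<Sum>k\<in>K. release k)"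
proof -
  have "(\<Sum>k\<in>K. gain k) - (\<Sum>k\<in>K. release k) = (\<Sum>k\<in>K. tgt k - cur k)"
    unfolding sum_subtractf[symmetric] by (rule sum.cong) (auto simp: gain_def release_def)
  also have "\<dots> = 0" using balanced by (simp add: sum_subtractf)
  finally show ?thesis by simp
qed

lemma moved_nonneg: "0 \<le> moved" unfolding moved_def by (simp add: sum_nonneg gain_nonneg)

lemma moved_zero: assumes "moved = 0" "k \<in> K" shows "gain k = 0" "release k = 0"
proof -
  show "gain k = 0" using assms finite_K gain_nonneg unfolding moved_def
    by (simp add: sum_nonneg_eq_0_iff)
  have "(\<Sum>k\<in>K. release k) = 0" using assms sum_gain_eq_sum_release unfolding moved_def by simp
  then show "release k = 0" using assms finite_K release_nonneg by (simp add: sum_nonneg_eq_0_iff)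
qed

lemma taken_nonneg: "a \<in> A \<Longrightarrow> 0 \<le> taken a"
  unfolding taken_def using y_nonneg others_nonneg gain_nonneg
  by (auto intro!: sum_nonneg divide_nonneg_nonneg)

lemma sum_taken: "(\<Sum>a\<in>A. taken a) = moved"
proof -
  have "(\<Sum>a\<in>A. taken a) = (\<Sum>k\<in>K. \<Sum>a\<in>A. gain k * y a k / others k)"
    unfolding taken_def by (rule sum.swap)
  also have "\<dots> = (\<Sum>k\<in>K. gain k * (\<Sum>a\<in>A. y a k / others k))"
    by (simp add: sum_distrib_left)
  also have "\<dots> = moved" unfolding moved_def by (rule sum.cong) (auto simp: gain_times_shares)
  finally show ?thesis .
qed

lemma y_new_nonneg: assumes "a \<in> A" "k \<in> K" shows "0 \<le> y_new a k"
proof -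
  have "gain k * y a k / others k \<le> y a k"
  proof (cases "others k = 0")
    case True then show ?thesis using y_nonneg assms by simp
  next
    case False
    then have "others k > 0" using others_nonneg assms by (simp add: less_le)
    moreover have "gain k * y a k \<le> others k * y a k"
      using gain_le_others[OF assms(2)] y_nonneg assms by (simp add: mult_right_mono)
    ultimately show ?thesis by (simp add: divide_le_eq mult.commute)
  qed
  moreover have "0 \<le> release k * taken a / moved"
    using release_nonneg taken_nonneg[OF assms(1)] moved_nonneg by simp
  ultimately show ?thesis unfolding y_new_def by linarith
qed

lemma y_new_row: assumes "a \<in> A" shows "(\<Sum>k\<in>K. y_new a k) = (\<Sum>k\<in>K. y a k)"
proof -
  have "(\<Sum>k\<in>K. release k * taken a / moved) = taken a * (\<Sum>k\<in>K. release k) / moved"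
    by (simp add: sum_distrib_right sum_divide_distrib mult.commute)
  also have "\<dots> = taken a"
  proof (cases "moved = 0")
    case True
    then have "taken a = 0" unfolding taken_def using moved_zero(1)[OF True] by simp
    then show ?thesis by simp
  next
    case False then show ?thesis using sum_gain_eq_sum_release unfolding moved_def by simp
  qed
  finally show ?thesis
    unfolding y_new_def taken_def by (simp add: sum.distrib sum_subtractf)
qed

lemma y_new_column: assumes "k \<in> K" shows "(\<Sum>a\<in>A. y_new a k) = others k - (tgt k - cur k)"
proof -
  have "(\<Sum>a\<in>A. y_new a k)
      = others k - gain k * (\<Sum>a\<in>A. y a k / others k) + release k * (\<Sum>a\<in>A. taken a) / moved"
    unfolding y_new_def others_def
    by (simp add: sum.distrib sum_subtractf sum_distrib_left sum_divide_distrib)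
  also have "\<dots> = others k - gain k + release k * moved / moved"
    using gain_times_shares[OF assms] sum_taken by simp
  also have "release k * moved / moved = release k"
    using moved_zero[OF _ assms] by (cases "moved = 0") auto
  finally show ?thesis unfolding gain_def release_def by auto
qed

lemma y_new_support: assumes "a \<in> A" "k \<in> K" "0 < y_new a k"
  shows "0 < y a k \<or> (tgt k < cur k \<and> (\<exists>k0\<in>K. cur k0 < tgt k0 \<and> 0 < y a k0))"
proof (rule ccontr)
  assume H: "\<not> ?thesis"
  then have z: "y a k = 0" using y_nonneg assms by force
  have "release k * taken a / moved = 0"
  proof (cases "tgt k < cur k")
    case False then show ?thesis by (simp add: release_def)
  next
    case True
    then have "\<forall>k0\<in>K. \<not> (cur k0 < tgt k0 \<and> 0 < y a k0)" using H by blast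
    then have "\<forall>k0\<in>K. gain k0 * y a k0 / others k0 = 0"
      using y_nonneg assms(1) unfolding gain_def by (force simp: max_def)
    then have "taken a = 0" unfolding taken_def by (simp del: divide_eq_0_iff mult_eq_0_iff)
    then show ?thesis by simp
  qed
  then show False using assms(3) z unfolding y_new_def by (simp del: divide_eq_0_iff mult_eq_0_iff)
qed

lemma transfer_nonneg: "a \<in> A \<Longrightarrow> k \<in> K \<Longrightarrow> 0 \<le> transfer k k' a"
  unfolding transfer_def using y_nonneg others_nonneg gain_nonneg release_nonneg moved_nonneg
  by (auto intro!: mult_nonneg_nonneg divide_nonneg_nonneg)

lemma sum_transfer_over_A: assumes "k \<in> K"
  shows "(\<Sum>a\<in>A. transfer k k' a) = gain k * (release k' / moved)"
proof -
  have "\<forall>a. transfer k k' a = (gain k * (release k' / moved)) * (y a k / others k)"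
    unfolding transfer_def by (simp add: ac_simps)
  then have "(\<Sum>a\<in>A. transfer k k' a) = gain k * (release k' / moved) * (\<Sum>a\<in>A. y a k / others k)"
    by (simp only: sum_distrib_left)
  also have "\<dots> = gain k * (\<Sum>a\<in>A. y a k / others k) * (release k' / moved)"
    by (simp only: ac_simps)
  finally show ?thesis by (simp only: gain_times_shares[OF assms])
qed

lemma sum_release_fractions: "moved \<noteq> 0 \<Longrightarrow> (\<Sum>k'\<in>K. release k' / moved) = 1"
  using sum_gain_eq_sum_release unfolding moved_def by (simp add: sum_divide_distrib[symmetric])

lemma sum_transfer_over_target: assumes "moved \<noteq> 0"
  shows "(\<Sum>k'\<in>K. transfer k k' a) = gain k * y a k / others k"
proof -
  have "(\<Sum>k'\<in>K. transfer k k' a) = gain k * y a k / others k * (\<Sum>k'\<in>K. release k' / moved)"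
    unfolding transfer_def by (simp add: sum_distrib_left)
  then show ?thesis using sum_release_fractions[OF assms] by simp
qed

lemma sum_transfer_over_source: "(\<Sum>k\<in>K. transfer k k' a) = taken a * (release k' / moved)"
  unfolding transfer_def taken_def by (simp only: sum_distrib_right)

lemma transfer_saving: assumes "a \<in> A" "k \<in> K" "k' \<in> K"
  shows "transfer k k' a * (ci k - ci k' - ca a k + ca a k') \<le> 0"
proof (cases "transfer k k' a = 0")
  case True then show ?thesis by simp
next
  case False
  then have "gain k \<noteq> 0" "y a k \<noteq> 0" "release k' \<noteq> 0" unfolding transfer_def by auto
  then have h: "cur k < tgt k" "tgt k' < cur k'" "0 < y a k" using y_nonneg assms
    unfolding gain_def release_def by (auto simp: max_def less_le split: if_splits)
  then have "k < k'" using gain_before_release assms by blast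
  moreover have "0 < cur k'" using h tgt_nonneg assms by force
  ultimately have "ci k + ca a k' \<le> ci k' + ca a k" using monge assms h by blast
  then show ?thesis using transfer_nonneg[OF assms(1,2), of k'] by (simp add: mult_le_0_iff)
qed

lemma transfer_facility_cost: assumes "moved \<noteq> 0"
  shows "(\<Sum>k\<in>K. \<Sum>k'\<in>K. \<Sum>a\<in>A. transfer k k' a * (ci k - ci k'))
       = (\<Sum>k\<in>K. ci k * tgt k) - (\<Sum>k\<in>K. ci k * cur k)"
proof -
  have from_k: "(\<Sum>k\<in>K. \<Sum>k'\<in>K. \<Sum>a\<in>A. transfer k k' a * ci k) = (\<Sum>k\<in>K. gain k * ci k)"
  proof -
    have "(\<Sum>k\<in>K. \<Sum>k'\<in>K. \<Sum>a\<in>A. transfer k k' a * ci k)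
        = (\<Sum>k\<in>K. \<Sum>k'\<in>K. (\<Sum>a\<in>A. transfer k k' a) * ci k)"
      by (simp add: sum_distrib_right)
    also have "\<dots> = (\<Sum>k\<in>K. \<Sum>k'\<in>K. gain k * ci k * (release k' / moved))"
      by (intro sum.cong refl) (simp add: sum_transfer_over_A)
    also have "\<dots> = (\<Sum>k\<in>K. gain k * ci k * (\<Sum>k'\<in>K. release k' / moved))"
      by (simp add: sum_distrib_left)
    finally show ?thesis using sum_release_fractions[OF assms] by simp
  qed
  have to_k': "(\<Sum>k\<in>K. \<Sum>k'\<in>K. \<Sum>a\<in>A. transfer k k' a * ci k') = (\<Sum>k'\<in>K. release k' * ci k')"
  proof -
    have "(\<Sum>k\<in>K. \<Sum>k'\<in>K. \<Sum>a\<in>A. transfer k k' a * ci k')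
        = (\<Sum>k\<in>K. \<Sum>k'\<in>K. (\<Sum>a\<in>A. transfer k k' a) * ci k')"
      by (simp add: sum_distrib_right)
    also have "\<dots> = (\<Sum>k\<in>K. \<Sum>k'\<in>K. gain k * (release k' / moved * ci k'))"
      by (intro sum.cong refl) (simp add: sum_transfer_over_A)
    also have "\<dots> = (\<Sum>k'\<in>K. \<Sum>k\<in>K. gain k * (release k' / moved * ci k'))" by (rule sum.swap)
    also have "\<dots> = (\<Sum>k'\<in>K. moved * (release k' / moved * ci k'))"
      unfolding moved_def by (simp only: sum_distrib_right)
    finally show ?thesis using assms by simp
  qed
  have "\<forall>k. ci k * tgt k = ci k * cur k + gain k * ci k - release k * ci k"
    unfolding gain_def release_def by (auto simp: max_def algebra_simps)
  then have "(\<Sum>k\<in>K. ci k * tgt k)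
      = (\<Sum>k\<in>K. ci k * cur k) + (\<Sum>k\<in>K. gain k * ci k) - (\<Sum>k\<in>K. release k * ci k)"
    by (simp add: sum.distrib sum_subtractf)
  moreover have "(\<Sum>k\<in>K. \<Sum>k'\<in>K. \<Sum>a\<in>A. transfer k k' a * (ci k - ci k'))
      = (\<Sum>k\<in>K. \<Sum>k'\<in>K. \<Sum>a\<in>A. transfer k k' a * ci k)
        - (\<Sum>k\<in>K. \<Sum>k'\<in>K. \<Sum>a\<in>A. transfer k k' a * ci k')"
    by (simp add: right_diff_distrib sum_subtractf)
  ultimately show ?thesis using from_k to_k' by linarith
qed

lemma transfer_others_cost: assumes "moved \<noteq> 0"
  shows "(\<Sum>k\<in>K. \<Sum>k'\<in>K. \<Sum>a\<in>A. transfer k k' a * (ca a k' - ca a k))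
       = (\<Sum>a\<in>A. \<Sum>k\<in>K. ca a k * y_new a k) - (\<Sum>a\<in>A. \<Sum>k\<in>K. ca a k * y a k)"
proof -
  have from_k: "(\<Sum>k\<in>K. \<Sum>k'\<in>K. \<Sum>a\<in>A. transfer k k' a * ca a k)
      = (\<Sum>a\<in>A. \<Sum>k\<in>K. ca a k * (gain k * y a k / others k))"
  proof -
    have "(\<Sum>k\<in>K. \<Sum>k'\<in>K. \<Sum>a\<in>A. transfer k k' a * ca a k)
        = (\<Sum>k\<in>K. \<Sum>a\<in>A. \<Sum>k'\<in>K. transfer k k' a * ca a k)"
      by (intro sum.cong refl) (rule sum.swap)
    also have "\<dots> = (\<Sum>k\<in>K. \<Sum>a\<in>A. (\<Sum>k'\<in>K. transfer k k' a) * ca a k)"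
      by (simp add: sum_distrib_right)
    also have "\<dots> = (\<Sum>k\<in>K. \<Sum>a\<in>A. ca a k * (gain k * y a k / others k))"
      by (simp add: sum_transfer_over_target[OF assms] mult.commute)
    also have "\<dots> = (\<Sum>a\<in>A. \<Sum>k\<in>K. ca a k * (gain k * y a k / others k))" by (rule sum.swap)
    finally show ?thesis .
  qed
  have to_k': "(\<Sum>k\<in>K. \<Sum>k'\<in>K. \<Sum>a\<in>A. transfer k k' a * ca a k')
      = (\<Sum>a\<in>A. \<Sum>k'\<in>K. ca a k' * (release k' * taken a / moved))"
  proof -
    have "(\<Sum>k\<in>K. \<Sum>k'\<in>K. \<Sum>a\<in>A. transfer k k' a * ca a k')
        = (\<Sum>k'\<in>K. \<Sum>k\<in>K. \<Sum>a\<in>A. transfer k k' a * ca a k')" by (rule sum.swap)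
    also have "\<dots> = (\<Sum>k'\<in>K. \<Sum>a\<in>A. \<Sum>k\<in>K. transfer k k' a * ca a k')"
      by (intro sum.cong refl) (rule sum.swap)
    also have "\<dots> = (\<Sum>k'\<in>K. \<Sum>a\<in>A. (\<Sum>k\<in>K. transfer k k' a) * ca a k')"
      by (simp add: sum_distrib_right)
    also have "\<dots> = (\<Sum>k'\<in>K. \<Sum>a\<in>A. ca a k' * (release k' * taken a / moved))"
      by (simp add: sum_transfer_over_source mult.commute)
    also have "\<dots> = (\<Sum>a\<in>A. \<Sum>k'\<in>K. ca a k' * (release k' * taken a / moved))" by (rule sum.swap)
    finally show ?thesis .
  qed
  have "(\<Sum>a\<in>A. \<Sum>k\<in>K. ca a k * y_new a k) = (\<Sum>a\<in>A. \<Sum>k\<in>K. ca a k * y a k)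
      - (\<Sum>a\<in>A. \<Sum>k\<in>K. ca a k * (gain k * y a k / others k))
      + (\<Sum>a\<in>A. \<Sum>k\<in>K. ca a k * (release k * taken a / moved))"
    unfolding y_new_def by (simp add: sum.distrib sum_subtractf algebra_simps)
  moreover have "(\<Sum>k\<in>K. \<Sum>k'\<in>K. \<Sum>a\<in>A. transfer k k' a * (ca a k' - ca a k))
      = (\<Sum>k\<in>K. \<Sum>k'\<in>K. \<Sum>a\<in>A. transfer k k' a * ca a k')
        - (\<Sum>k\<in>K. \<Sum>k'\<in>K. \<Sum>a\<in>A. transfer k k' a * ca a k)"
    by (simp add: right_diff_distrib sum_subtractf)
  ultimately show ?thesis using from_k to_k' by linarith
qed

lemma exchange_cost_le:
  "(\<Sum>k\<in>K. ci k * tgt k) + (\<Sum>a\<in>A. \<Sum>k\<in>K. ca a k * y_new a k)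
     \<le> (\<Sum>k\<in>K. ci k * cur k) + (\<Sum>a\<in>A. \<Sum>k\<in>K. ca a k * y a k)"
proof (cases "moved = 0")
  case True
  then have "\<forall>k\<in>K. tgt k = cur k"
    using moved_zero unfolding gain_def release_def by (force simp: max_def split: if_splits)
  moreover have "\<forall>a\<in>A. \<forall>k\<in>K. y_new a k = y a k" unfolding y_new_def using moved_zero[OF True]
    by simp
  ultimately show ?thesis by simp
next
  case False
  have "(\<Sum>k\<in>K. \<Sum>k'\<in>K. \<Sum>a\<in>A. transfer k k' a * (ci k - ci k' - ca a k + ca a k')) \<le> 0"
    by (intro sum_nonpos) (simp add: transfer_saving)
  moreover have "(\<Sum>k\<in>K. \<Sum>k'\<in>K. \<Sum>a\<in>A. transfer k k' a * (ci k - ci k' - ca a k + ca a k'))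
      = (\<Sum>k\<in>K. \<Sum>k'\<in>K. \<Sum>a\<in>A. transfer k k' a * (ci k - ci k'))
        + (\<Sum>k\<in>K. \<Sum>k'\<in>K. \<Sum>a\<in>A. transfer k k' a * (ca a k' - ca a k))"
    by (simp add: sum.distrib[symmetric] algebra_simps)
  ultimately show ?thesis
    using transfer_facility_cost[OF False] transfer_others_cost[OF False] by linarith
qed

end

section \<open>The line model\<close>

locale monge_cfl =
  fixes m n :: nat and f U dem :: "nat \<Rightarrow> nat" and c :: "nat \<Rightarrow> nat \<Rightarrow> enat"
  assumes dem_pos: "\<forall>j\<in>{1..n}. 0 < dem j"
    and monge: "\<forall>h i j k. 1 \<le> h \<and> h < i \<and> i \<le> m \<and> 1 \<le> j \<and> j < k \<and> k \<le> n
                   \<longrightarrow> c h j + c i k \<le> c h k + c i j"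
begin

definition cum :: "nat \<Rightarrow> nat" where "cum k = (\<Sum>t\<in>{1..k}. dem t)"

abbreviation total :: nat where "total \<equiv> cum n"

definition overlap :: "nat \<Rightarrow> real \<Rightarrow> real \<Rightarrow> real" where
  "overlap k s e = max 0 (min e (real (cum k)) - max s (real (cum (k - 1))))"

definition overlap_nat :: "nat \<Rightarrow> nat \<Rightarrow> nat \<Rightarrow> nat" where
  "overlap_nat k a b = min b (cum k) - max a (cum (k - 1))"

definition seg_cost :: "nat \<Rightarrow> nat \<Rightarrow> nat \<Rightarrow> enat" where
  "seg_cost i a b = (\<Sum>k\<in>{1..n}. c i k * enat (overlap_nat k a b))"

abbreviation c_real :: "nat \<Rightarrow> nat \<Rightarrow> real" where "c_real a k \<equiv> real_of_enat (c a k)"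

text \<open>Indexed by the number \<open>m + 1 - i\<close> of facilities still available.\<close>

fun dp_steps :: "nat \<Rightarrow> nat \<Rightarrow> enat" where
  "dp_steps 0 p = (if p < total then \<infinity> else 0)"
| "dp_steps (Suc t) p = min (dp_steps t p) (enat (f (m - t)) +
      (INF u\<in>{1..min (U (m - t)) (total - p)}. seg_cost (m - t) p (p + u) + dp_steps t (p + u)))"

definition dp :: "nat \<Rightarrow> nat \<Rightarrow> enat" where "dp i p = dp_steps (m + 1 - i) p"

lemma dp_base: "dp (m + 1) p = (if p < total then \<infinity> else 0)"
  by (simp add: dp_def)

lemma dp_rec: assumes "i \<in> {1..m}"
  shows "dp i p = min (dp (i + 1) p) (enat (f i) +
      (INF u\<in>{1..min (U i) (total - p)}. seg_cost i p (p + u) + dp (i + 1) (p + u)))"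
proof -
  have "m + 1 - i = Suc (m - i)" "m - (m - i) = i" "m + 1 - (i + 1) = m - i"
    using assms by auto
  then show ?thesis unfolding dp_def by (simp only: dp_steps.simps)
qed

lemma dp_le_skip: "i \<in> {1..m} \<Longrightarrow> dp i p \<le> dp (i + 1) p"
  unfolding dp_rec by (rule min.cobounded1)

lemma dp_le_open: assumes "i \<in> {1..m}" "a < b" "b \<le> total" "b - a \<le> U i"
  shows "dp i a \<le> enat (f i) + seg_cost i a b + dp (i + 1) b"
proof -
  have "b - a \<in> {1..min (U i) (total - a)}" using assms diff_le_mono[of b total a] by simp
  then have "(INF u\<in>{1..min (U i) (total - a)}. seg_cost i a (a + u) + dp (i + 1) (a + u))
      \<le> seg_cost i a (a + (b - a)) + dp (i + 1) (a + (b - a))"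
    by (rule INF_lower)
  then have "(INF u\<in>{1..min (U i) (total - a)}. seg_cost i a (a + u) + dp (i + 1) (a + u))
      \<le> seg_cost i a b + dp (i + 1) b"
    using assms(2) by simp
  then have "enat (f i) + (INF u\<in>{1..min (U i) (total - a)}.
      seg_cost i a (a + u) + dp (i + 1) (a + u))
      \<le> enat (f i) + seg_cost i a b + dp (i + 1) b"
    by (simp only: add.assoc add_left_mono)
  then show ?thesis unfolding dp_rec[OF assms(1), of a] by (rule min.coboundedI2)
qed

lemma dp_total: "i \<in> {1..m + 1} \<Longrightarrow> dp i total = 0"
proof (induction "m + 1 - i" arbitrary: i)
  case 0 then show ?case using dp_base[of total] by simp
next
  case (Suc t)
  then have "i \<in> {1..m}" "dp (i + 1) total = 0" by auto
  then show ?case using dp_rec by simp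
qed

lemma cum_0 [simp]: "cum 0 = 0" by (simp add: cum_def)

lemma cum_Suc [simp]: "cum (Suc k) = cum k + dem (Suc k)" by (simp add: cum_def)

lemma cum_mono: "a \<le> b \<Longrightarrow> cum a \<le> cum b"
  unfolding cum_def by (rule sum_mono2) auto

lemma cum_pred: "1 \<le> k \<Longrightarrow> cum k = cum (k - 1) + dem k"
  by (cases k) auto

lemma cum_split: "j \<le> l \<Longrightarrow> cum l = cum j + (\<Sum>k\<in>{Suc j..l}. dem k)"
proof (induction l rule: dec_induct)
  case base then show ?case by simp
next
  case (step l) then show ?case by (simp add: sum.cl_ivl_Suc)
qed

lemma overlap_nonneg: "0 \<le> overlap k s e" by (simp add: overlap_def)

lemma overlap_self: "overlap k s s = 0" by (auto simp: overlap_def max_def min_def)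

lemma overlap_split: assumes "s \<le> z" "z \<le> e" shows "overlap k s e = overlap k s z + overlap k z e"
proof -
  have "real (cum (k - 1)) \<le> real (cum k)" using cum_mono[of "k - 1" k] by simp
  then show ?thesis using assms unfolding overlap_def by (auto simp: max_def min_def)
qed

lemma sum_overlap_prefix: assumes "0 \<le> s" "s \<le> e"
  shows "(\<Sum>k\<in>{1..N}. overlap k s e) = max 0 (min e (real (cum N)) - s)"
proof (induction N)
  case 0 then show ?case using assms by (simp add: max_def min_def)
next
  case (Suc N)
  have "(\<Sum>k\<in>{1..Suc N}. overlap k s e) = overlap (Suc N) s e + (\<Sum>k\<in>{1..N}. overlap k s e)"
    by (simp add: atLeastAtMostSuc_conv add.commute)
  also have "\<dots> = max 0 (min e (real (cum (Suc N))) - s)"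
    using Suc assms unfolding overlap_def by (auto simp: max_def min_def)
  finally show ?case .
qed

lemma sum_overlap: assumes "0 \<le> s" "s \<le> e" "e \<le> real total"
  shows "(\<Sum>k\<in>{1..n}. overlap k s e) = e - s"
  using sum_overlap_prefix[OF assms(1,2), of n] assms by (simp add: max_def min_def)

lemma overlap_nat_real: "real (overlap_nat k a b) = overlap k (real a) (real b)"
  unfolding overlap_nat_def overlap_def by (auto simp: max_def min_def)

lemma overlap_pos_D: "0 < overlap k s e \<Longrightarrow> real (cum (k - 1)) < e \<and> s < real (cum k) \<and> s < e"
  unfolding overlap_def by (auto simp: max_def min_def split: if_splits)

lemma overlap_less_D: assumes "e \<le> real total" "k \<le> n" "overlap k s e < overlap k s (real total)"
  shows "e < real (cum k)"
proof (rule ccontr)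
  assume "\<not> e < real (cum k)"
  moreover have "real (cum k) \<le> real total" using cum_mono[OF assms(2)] by simp
  ultimately have "min e (real (cum k)) = min (real total) (real (cum k))" using assms(1)
    by (simp add: min_def)
  then show False using assms(3) unfolding overlap_def by simp
qed

section \<open>Fractional solutions on the line\<close>

text \<open>\<open>y a k\<close> is the amount (not the fraction) of the demand of client \<open>k\<close> in the segment
  \<open>[s, total]\<close> that facility \<open>a\<close> serves.\<close>

definition line_feasible :: "nat \<Rightarrow> real \<Rightarrow> nat set \<Rightarrow> (nat \<Rightarrow> nat \<Rightarrow> real) \<Rightarrow> bool" where
  "line_feasible i s Fo y \<longleftrightarrow> Fo \<subseteq> {i..m} \<and> (\<forall>a\<in>{i..m}. \<forall>k\<in>{1..n}. 0 \<le> y a k) \<and>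
     (\<forall>k\<in>{1..n}. (\<Sum>a\<in>{i..m}. y a k) = overlap k s total) \<and>
     (\<forall>a\<in>{i..m}. (\<Sum>k\<in>{1..n}. y a k) \<le> real (U a)) \<and>
     (\<forall>a\<in>{i..m}. \<forall>k\<in>{1..n}. 0 < y a k \<longrightarrow> a \<in> Fo \<and> c a k \<noteq> \<infinity>)"

definition line_cost :: "nat \<Rightarrow> nat set \<Rightarrow> (nat \<Rightarrow> nat \<Rightarrow> real) \<Rightarrow> real" where
  "line_cost i Fo y = (\<Sum>a\<in>Fo. real (f a)) + (\<Sum>a\<in>{i..m}. \<Sum>k\<in>{1..n}. c_real a k * y a k)"

lemma seg_cost_finite_D: assumes "seg_cost i a b \<noteq> \<infinity>" "k \<in> {1..n}" "0 < overlap_nat k a b"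
  shows "c i k \<noteq> \<infinity>"
proof
  assume "c i k = \<infinity>"
  moreover have "c i k * enat (overlap_nat k a b) \<le> seg_cost i a b" unfolding seg_cost_def
    by (rule member_le_sum) (use assms in auto)
  ultimately show False using assms by (simp add: zero_enat_def)
qed

lemma seg_cost_real: assumes "\<forall>k\<in>{1..n}. 0 < overlap_nat k a b \<longrightarrow> c i k \<noteq> \<infinity>"
  shows "ereal_of_enat (seg_cost i a b) = ereal (\<Sum>k\<in>{1..n}. c_real i k * overlap k a b)"
proof -
  define N where "N k = the_enat (c i k) * overlap_nat k a b" for k
  have terms: "c i k * enat (overlap_nat k a b) = of_nat (N k) \<and>
      c_real i k * overlap k a b = real (N k)"
    if k: "k \<in> {1..n}" for k
  proof (cases "overlap_nat k a b = 0")
    case True then show ?thesis using overlap_nat_real[of k a b]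
      by (simp add: N_def zero_enat_def[symmetric])
  next
    case False
    then have "c i k \<noteq> \<infinity>" using assms k by simp
    then obtain x where "c i k = enat x" by (cases "c i k") auto
    then show ?thesis by (simp add: N_def of_nat_eq_enat overlap_nat_real[symmetric])
  qed
  then have "seg_cost i a b = of_nat (\<Sum>k\<in>{1..n}. N k)"
    unfolding seg_cost_def of_nat_sum by (intro sum.cong) auto
  moreover have "(\<Sum>k\<in>{1..n}. c_real i k * overlap k a b) = real (\<Sum>k\<in>{1..n}. N k)"
    unfolding of_nat_sum using terms by (intro sum.cong) auto
  ultimately show ?thesis by (simp add: of_nat_eq_enat)
qed

lemma line_feasible_skip: assumes "i \<in> {1..m}" "line_feasible (i + 1) s Fo y"
  shows "line_feasible i s Fo (y(i := (\<lambda>_. 0)))"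
    and "line_cost i Fo (y(i := (\<lambda>_. 0))) = line_cost (i + 1) Fo y"
proof -
  have split: "{i..m} = insert i {i + 1..m}" using assms(1) by auto
  show "line_feasible i s Fo (y(i := (\<lambda>_. 0)))"
    using assms(2) unfolding line_feasible_def split by auto
  show "line_cost i Fo (y(i := (\<lambda>_. 0))) = line_cost (i + 1) Fo y"
    unfolding line_cost_def split by simp
qed

lemma line_feasible_open:
  assumes i: "i \<in> {1..m}" and se: "0 \<le> s" "s \<le> e" "e \<le> real total" "e - s \<le> real (U i)"
    and fin: "\<forall>k\<in>{1..n}. 0 < overlap k s e \<longrightarrow> c i k \<noteq> \<infinity>"
    and feas: "line_feasible (i + 1) e Fo y"
  defines "y' \<equiv> y(i := (\<lambda>k. overlap k s e))"
  shows "line_feasible i s (insert i Fo) y'"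
    and "line_cost i (insert i Fo) y'
           = real (f i) + (\<Sum>k\<in>{1..n}. c_real i k * overlap k s e) + line_cost (i + 1) Fo y"
proof -
  have split: "{i..m} = insert i {i + 1..m}" using i by auto
  have others: "\<forall>a\<in>{i + 1..m}. y' a = y a" unfolding y'_def by auto
  have "i \<notin> Fo" "Fo \<subseteq> {i + 1..m}" using feas unfolding line_feasible_def by auto
  then show "line_cost i (insert i Fo) y'
      = real (f i) + (\<Sum>k\<in>{1..n}. c_real i k * overlap k s e) + line_cost (i + 1) Fo y"
    unfolding line_cost_def split using others by (simp add: y'_def finite_subset)
  have column: "(\<Sum>a\<in>{i..m}. y' a k) = overlap k s total" if "k \<in> {1..n}" for k
  proof -
    have "(\<Sum>a\<in>{i..m}. y' a k) = overlap k s e + overlap k e total"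
      unfolding split using others feas that by (simp add: y'_def line_feasible_def)
    then show ?thesis using overlap_split[OF se(2,3)] by simp
  qed
  have row: "(\<Sum>k\<in>{1..n}. y' i k) \<le> real (U i)"
    using sum_overlap[OF se(1-3)] se(4) by (simp add: y'_def)
  show "line_feasible i s (insert i Fo) y'"
    unfolding line_feasible_def
    using feas column row fin i others unfolding line_feasible_def split
    by (auto simp: y'_def overlap_nonneg)
qed

lemma dp_rec_attained: assumes i: "i \<in> {1..m}"
  shows "dp i p = dp (i + 1) p \<or> (\<exists>u\<in>{1..min (U i) (total - p)}.
           dp i p = enat (f i) + seg_cost i p (p + u) + dp (i + 1) (p + u))"
proof -
  define S where "S = {1..min (U i) (total - p)}"
  define g where "g u = seg_cost i p (p + u) + dp (i + 1) (p + u)" for u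
  have rec: "dp i p = min (dp (i + 1) p) (enat (f i) + (INF u\<in>S. g u))"
    unfolding S_def g_def by (rule dp_rec[OF i])
  show ?thesis
  proof (cases "S = {}")
    case True then show ?thesis using rec by (simp add: top_enat_def)
  next
    case False
    moreover have "finite S" unfolding S_def by simp
    ultimately have "(INF u\<in>S. g u) \<in> g ` S"
      using cInf_eq_Min[of "g ` S"] Min_in by auto
    then show ?thesis using rec unfolding S_def g_def by (auto simp: min_def add.assoc)
  qed
qed

lemma line_solution_open:
  assumes i: "i \<in> {1..m}" and u: "1 \<le> u" "u \<le> U i" "p + u \<le> total"
    and fin: "seg_cost i p (p + u) \<noteq> \<infinity>" and feas: "line_feasible (i + 1) (real (p + u)) Fo y"
  shows "\<exists>Fo' y'. line_feasible i (real p) Fo' y' \<and> ereal (line_cost i Fo' y')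
           = ereal_of_enat (enat (f i) + seg_cost i p (p + u)) + ereal (line_cost (i + 1) Fo y)"
proof -
  have fin_i: "\<forall>k\<in>{1..n}. 0 < overlap_nat k p (p + u) \<longrightarrow> c i k \<noteq> \<infinity>"
    using seg_cost_finite_D[OF fin] by blast
  then have "\<forall>k\<in>{1..n}. 0 < overlap k (real p) (real (p + u)) \<longrightarrow> c i k \<noteq> \<infinity>"
    by (metis overlap_nat_real of_nat_0_less_iff)
  moreover have "0 \<le> real p" "real p \<le> real (p + u)" "real (p + u) \<le> real total"
    "real (p + u) - real p \<le> real (U i)" using u by auto
  ultimately have "line_feasible i (real p) (insert i Fo) (y(i := \<lambda>k. overlap k p (p + u)))"
    "line_cost i (insert i Fo) (y(i := \<lambda>k. overlap k p (p + u)))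
       = real (f i) + (\<Sum>k\<in>{1..n}. c_real i k * overlap k p (p + u)) + line_cost (i + 1) Fo y"
    using line_feasible_open[OF i _ _ _ _ _ feas] by blast+
  moreover have "ereal_of_enat (enat (f i) + seg_cost i p (p + u))
      = ereal (real (f i) + (\<Sum>k\<in>{1..n}. c_real i k * overlap k (real p) (real (p + u))))"
    using seg_cost_real[OF fin_i] by (simp add: ereal_of_enat_add)
  ultimately show ?thesis by (metis plus_ereal.simps(1))
qed

lemma dp_attained:
  "i \<in> {1..m + 1} \<Longrightarrow> p \<le> total \<Longrightarrow> dp i p \<noteq> \<infinity> \<Longrightarrow>
    \<exists>Fo y. line_feasible i (real p) Fo y \<and> ereal_of_enat (dp i p) = ereal (line_cost i Fo y)"
proof (induction "m + 1 - i" arbitrary: i p)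
  case 0
  then have "i = m + 1" "p = total" using dp_base by (auto split: if_splits)
  then have "line_feasible i (real p) {} (\<lambda>_ _. 0)" "line_cost i {} (\<lambda>_ _. 0) = 0" "dp i p = 0"
    using overlap_self dp_base by (auto simp: line_feasible_def line_cost_def)
  then show ?case by auto
next
  case (Suc t)
  then have i: "i \<in> {1..m}" by auto
  have IH: "\<And>q. q \<le> total \<Longrightarrow> dp (i + 1) q \<noteq> \<infinity> \<Longrightarrow> \<exists>Fo y. line_feasible (i + 1) (real q) Fo y
      \<and> ereal_of_enat (dp (i + 1) q) = ereal (line_cost (i + 1) Fo y)"
    using Suc i by auto
  from dp_rec_attained[OF i, of p] show ?case
  proof
    assume "dp i p = dp (i + 1) p"
    then show ?thesis using IH Suc.prems line_feasible_skip[OF i] by metis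
  next
    assume "\<exists>u\<in>{1..min (U i) (total - p)}.
      dp i p = enat (f i) + seg_cost i p (p + u) + dp (i + 1) (p + u)"
    then obtain u where u: "1 \<le> u" "u \<le> U i" "p + u \<le> total"
      and open_u: "dp i p = enat (f i) + seg_cost i p (p + u) + dp (i + 1) (p + u)" by auto
    have fin: "seg_cost i p (p + u) \<noteq> \<infinity>" "dp (i + 1) (p + u) \<noteq> \<infinity>"
      using open_u Suc.prems(3) by (auto simp: plus_eq_infty_iff_enat)
    obtain Fo y where feas: "line_feasible (i + 1) (real (p + u)) Fo y"
      and cost: "ereal_of_enat (dp (i + 1) (p + u)) = ereal (line_cost (i + 1) Fo y)"
      using IH[OF u(3) fin(2)] by blast
    have "ereal_of_enat (dp i p)
        = ereal_of_enat (enat (f i) + seg_cost i p (p + u)) + ereal (line_cost (i + 1) Fo y)"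
      using open_u cost by (simp add: ereal_of_enat_add)
    then show ?thesis using line_solution_open[OF i u fin(1) feas] by metis
  qed
qed

lemma monge_real: assumes "1 \<le> h" "h < i" "i \<le> m" "1 \<le> j" "j < k" "k \<le> n"
  "c h k \<noteq> \<infinity>" "c i j \<noteq> \<infinity>"
  shows "c h j \<noteq> \<infinity>" "c i k \<noteq> \<infinity>" "c_real h j + c_real i k \<le> c_real h k + c_real i j"
proof -
  have M: "c h j + c i k \<le> c h k + c i j" using monge assms by blast
  obtain x1 x2 where x: "c h k = enat x1" "c i j = enat x2" using assms(7,8) by auto
  then have "c h j \<noteq> \<infinity> \<and> c i k \<noteq> \<infinity>" using M by (cases "c h j"; cases "c i k") auto
  then show "c h j \<noteq> \<infinity>" "c i k \<noteq> \<infinity>" by auto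
  then obtain x3 x4 where "c h j = enat x3" "c i k = enat x4" by auto
  then show "c_real h j + c_real i k \<le> c_real h k + c_real i j" using M x by simp
qed

definition flow :: "(nat \<Rightarrow> nat \<Rightarrow> real) \<Rightarrow> nat \<Rightarrow> real" where
  "flow y i = (\<Sum>k\<in>{1..n}. y i k)"

context
  fixes i :: nat and s :: real and Fo :: "nat set" and y :: "nat \<Rightarrow> nat \<Rightarrow> real"
  assumes i: "i \<in> {1..m}" and s: "0 \<le> s" "s \<le> real total" and feas: "line_feasible i s Fo y"
    and flow_pos: "0 < flow y i"
begin

lemma facilities_split: "{i..m} = insert i {i + 1..m}" using i by auto

lemma flow_nonneg: "a \<in> {i..m} \<Longrightarrow> k \<in> {1..n} \<Longrightarrow> 0 \<le> y a k"
  using feas unfolding line_feasible_def by blast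

lemma flow_support: "a \<in> {i..m} \<Longrightarrow> k \<in> {1..n} \<Longrightarrow> 0 < y a k \<Longrightarrow> a \<in> Fo \<and> c a k \<noteq> \<infinity>"
  using feas unfolding line_feasible_def by blast

lemma column_sum: "k \<in> {1..n} \<Longrightarrow> y i k + (\<Sum>a\<in>{i + 1..m}. y a k) = overlap k s total"
  using feas unfolding line_feasible_def facilities_split by simp

lemma y_i_le_overlap: assumes "k \<in> {1..n}" shows "y i k \<le> overlap k s total"
proof -
  have "0 \<le> (\<Sum>a\<in>{i + 1..m}. y a k)" by (rule sum_nonneg) (use flow_nonneg assms in auto)
  then show ?thesis using column_sum[OF assms] by linarith
qed

lemma reach_le_total: "s + flow y i \<le> real total"
proof -
  have "flow y i \<le> (\<Sum>k\<in>{1..n}. overlap k s total)"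
    unfolding flow_def by (intro sum_mono y_i_le_overlap)
  then show ?thesis using sum_overlap[of s "real total"] s by simp
qed

lemma flow_le_capacity: "flow y i \<le> real (U i)"
  using feas i unfolding line_feasible_def flow_def by auto

lemma le_reach: "s \<le> s + flow y i"
  using flow_pos by simp

lemma sum_overlap_reach: "(\<Sum>k\<in>{1..n}. overlap k s (s + flow y i)) = (\<Sum>k\<in>{1..n}. y i k)"
  using sum_overlap[OF s(1) le_reach reach_le_total] unfolding flow_def by simp

text \<open>Where facility \<open>i\<close> serves less than the segment \<open>[s, s + flow y i]\<close> asks, the client
  starts left of the segment end; where it serves more, the client extends right of it.\<close>

lemma shortfall_before_excess:
  assumes "k \<in> {1..n}" "k' \<in> {1..n}" "y i k < overlap k s (s + flow y i)"
    "overlap k' s (s + flow y i) < y i k'"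
  shows "k < k'"
proof (rule ccontr)
  assume "\<not> k < k'"
  moreover have "k' \<noteq> k" using assms by auto
  ultimately have "real (cum k') \<le> real (cum (k - 1))" using cum_mono by simp
  moreover have "0 \<le> y i k" using flow_nonneg i assms(1) by auto
  then have "real (cum (k - 1)) < s + flow y i"
    using overlap_pos_D[of k s "s + flow y i"] assms(3) by linarith
  moreover have "overlap k' s (s + flow y i) < overlap k' s total"
    using assms(4) y_i_le_overlap[OF assms(2)] by linarith
  then have "s + flow y i < real (cum k')"
    using overlap_less_D[OF reach_le_total] assms(2) by simp
  ultimately show False by simp
qed

lemma exchange_setting:
  "monge_exchange {i + 1..m} {1..n} (y i) (\<lambda>k. overlap k s (s + flow y i)) (c_real i) y c_real"
proof unfold_locales
  show "finite {1..n}" by simp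
  show "\<forall>a\<in>{i + 1..m}. \<forall>k\<in>{1..n}. 0 \<le> y a k"
    using flow_nonneg i by auto
  show "\<forall>k\<in>{1..n}. 0 \<le> overlap k s (s + flow y i)" by (simp add: overlap_nonneg)
  show "(\<Sum>k\<in>{1..n}. overlap k s (s + flow y i)) = (\<Sum>k\<in>{1..n}. y i k)" by (fact sum_overlap_reach)
  show "\<forall>k\<in>{1..n}. overlap k s (s + flow y i) - y i k \<le> (\<Sum>a\<in>{i + 1..m}. y a k)"
  proof
    fix k assume "k \<in> {1..n}"
    then show "overlap k s (s + flow y i) - y i k \<le> (\<Sum>a\<in>{i + 1..m}. y a k)"
      using column_sum[of k] overlap_split[OF le_reach reach_le_total, of k]
        overlap_nonneg[of k "s + flow y i" "real total"] by linarith
  qed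
  show "\<forall>k\<in>{1..n}. \<forall>k'\<in>{1..n}. y i k < overlap k s (s + flow y i) \<longrightarrow>
      overlap k' s (s + flow y i) < y i k' \<longrightarrow> k < k'"
    using shortfall_before_excess by blast
  show "\<forall>a\<in>{i + 1..m}. \<forall>k\<in>{1..n}. \<forall>k'\<in>{1..n}. k < k' \<longrightarrow> 0 < y a k \<longrightarrow> 0 < y i k' \<longrightarrow>
      y i k < overlap k s (s + flow y i) \<longrightarrow> overlap k' s (s + flow y i) < y i k' \<longrightarrow>
      c_real i k + c_real a k' \<le> c_real i k' + c_real a k"
  proof (intro ballI impI)
    fix a k k' assume a: "a \<in> {i + 1..m}" and k: "k \<in> {1..n}" "k' \<in> {1..n}" "k < k'"
      and pos: "0 < y a k" "0 < y i k'"
    have "c a k \<noteq> \<infinity>" "c i k' \<noteq> \<infinity>"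
      using flow_support a k pos facilities_split by auto
    moreover have "1 \<le> i" "i < a" "a \<le> m" "1 \<le> k" "k < k'" "k' \<le> n" using i a k by auto
    ultimately show "c_real i k + c_real a k' \<le> c_real i k' + c_real a k"
      using monge_real(3)[of i a k k'] by simp
  qed
qed

lemma excess_exists:
  assumes "k \<in> {1..n}" "y i k < overlap k s (s + flow y i)"
    shows "\<exists>k'\<in>{1..n}. overlap k' s (s + flow y i) < y i k'"
proof (rule ccontr)
  assume "\<not> ?thesis"
  then have "(\<Sum>k\<in>{1..n}. y i k) < (\<Sum>k\<in>{1..n}. overlap k s (s + flow y i))"
    using assms by (intro sum_strict_mono_ex1) (auto simp: not_less)
  then show False using sum_overlap_reach by simp
qed

text \<open>Client \<open>k\<close> is served by another facility \<open>a\<close> while \<open>i\<close> serves a later client \<open>k'\<close>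
  beyond its share, so the Monge property transfers finiteness from \<open>c i k'\<close> and
  \<open>c a k\<close> to \<open>c i k\<close>.\<close>

lemma cost_finite_on_segment: assumes "k \<in> {1..n}" "0 < overlap k s (s + flow y i)"
  shows "c i k \<noteq> \<infinity>"
proof (cases "0 < y i k")
  case True then show ?thesis using flow_support i assms(1) by auto
next
  case False
  then have short: "y i k < overlap k s (s + flow y i)" using assms(2) by linarith
  have "0 \<le> y i k" using flow_nonneg i assms(1) by auto
  then have "0 < (\<Sum>a\<in>{i + 1..m}. y a k)"
    using short column_sum[OF assms(1)] overlap_split[OF le_reach reach_le_total, of k]
      overlap_nonneg[of k "s + flow y i" "real total"] by linarith
  then obtain a where a: "a \<in> {i + 1..m}" "0 < y a k"
    by (metis not_less sum_nonpos)
  obtain k' where k': "k' \<in> {1..n}" "overlap k' s (s + flow y i) < y i k'"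
    using excess_exists[OF assms(1) short] by blast
  have "k < k'" using shortfall_before_excess[OF assms(1) k'(1) short k'(2)] .
  moreover have "c a k \<noteq> \<infinity>" using flow_support a assms(1) facilities_split by auto
  moreover have "c i k' \<noteq> \<infinity>" using flow_support i k' overlap_nonneg[of k' s "s + flow y i"] by force
  ultimately show ?thesis using monge_real(1)[of i a k k'] i a assms(1) k'(1) by auto
qed

lemma facility_opened: "i \<in> Fo"
proof -
  obtain k where "k \<in> {1..n}" "0 < y i k"
    using flow_pos unfolding flow_def by (metis not_less sum_nonpos)
  then show ?thesis using flow_support i by auto
qed

lemma exchanged_support:
  assumes a: "a \<in> {i + 1..m}" and k: "k \<in> {1..n}"
    and pos: "0 < monge_exchange.y_new {i + 1..m} {1..n} (y i)
      (\<lambda>k. overlap k s (s + flow y i)) y a k"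
  shows "a \<in> Fo - {i} \<and> c a k \<noteq> \<infinity>"
  using monge_exchange.y_new_support[OF exchange_setting a k pos]
proof
  assume "0 < y a k" then show ?thesis using flow_support a k facilities_split by auto
next
  assume "overlap k s (s + flow y i) < y i k \<and>
    (\<exists>k0\<in>{1..n}. y i k0 < overlap k0 s (s + flow y i) \<and> 0 < y a k0)"
  then obtain k0 where k0: "overlap k s (s + flow y i) < y i k" "k0 \<in> {1..n}"
    "y i k0 < overlap k0 s (s + flow y i)"
    "0 < y a k0" by blast
  have "k0 < k" using shortfall_before_excess[OF k0(2) k k0(3,1)] .
  moreover have "a \<in> Fo" "c a k0 \<noteq> \<infinity>" using flow_support a k0(2,4) facilities_split by auto
  moreover have "c i k \<noteq> \<infinity>" using flow_support i k k0(1) overlap_nonneg[of k s "s + flow y i"]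
    by force
  ultimately show ?thesis using monge_real(2)[of i a k0 k] i a k0(2) k by auto
qed

lemma exchanged_solution:
  obtains y' where "line_feasible (i + 1) (s + flow y i) (Fo - {i}) y'"
    and "(\<Sum>k\<in>{1..n}. c_real i k * overlap k s (s + flow y i))
        + (\<Sum>a\<in>{i + 1..m}. \<Sum>k\<in>{1..n}. c_real a k * y' a k)
           \<le> (\<Sum>a\<in>{i..m}. \<Sum>k\<in>{1..n}. c_real a k * y a k)"
proof -
  interpret X: monge_exchange "{i + 1..m}" "{1..n}" "y i" "\<lambda>k. overlap k s (s + flow y i)"
    "c_real i" y c_real
    by (rule exchange_setting)
  have "line_feasible (i + 1) (s + flow y i) (Fo - {i}) X.y_new"
    unfolding line_feasible_def
  proof (intro conjI)
    show "Fo - {i} \<subseteq> {i + 1..m}" using feas unfolding line_feasible_def by auto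
    show "\<forall>a\<in>{i + 1..m}. \<forall>k\<in>{1..n}. 0 \<le> X.y_new a k" using X.y_new_nonneg by blast
    show "\<forall>k\<in>{1..n}. (\<Sum>a\<in>{i + 1..m}. X.y_new a k) = overlap k (s + flow y i) (real total)"
    proof
      fix k assume k: "k \<in> {1..n}"
      have "(\<Sum>a\<in>{i + 1..m}. X.y_new a k) = overlap k s total - overlap k s (s + flow y i)"
        using X.y_new_column[OF k] column_sum[OF k] unfolding X.others_def by simp
      then show "(\<Sum>a\<in>{i + 1..m}. X.y_new a k) = overlap k (s + flow y i) (real total)"
        using overlap_split[OF le_reach reach_le_total, of k] by simp
    qed
    show "\<forall>a\<in>{i + 1..m}. (\<Sum>k\<in>{1..n}. X.y_new a k) \<le> real (U a)"
      using X.y_new_row feas facilities_split unfolding line_feasible_def by auto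
    show "\<forall>a\<in>{i + 1..m}. \<forall>k\<in>{1..n}. 0 < X.y_new a k \<longrightarrow> a \<in> Fo - {i} \<and> c a k \<noteq> \<infinity>"
      using exchanged_support by blast
  qed
  moreover have "(\<Sum>k\<in>{1..n}. c_real i k * overlap k s (s + flow y i))
      + (\<Sum>a\<in>{i + 1..m}. \<Sum>k\<in>{1..n}. c_real a k * X.y_new a k)
      \<le> (\<Sum>a\<in>{i..m}. \<Sum>k\<in>{1..n}. c_real a k * y a k)"
    using X.exchange_cost_le unfolding facilities_split by simp
  ultimately show thesis using that by blast
qed

end

section \<open>The interpolated recursion is a lower bound\<close>

definition dp_interp :: "nat \<Rightarrow> real \<Rightarrow> ereal" where
  "dp_interp i s = ereal (1 - frac s) * ereal_of_enat (dp i (nat \<lfloor>s\<rfloor>))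
                   + ereal (frac s) * ereal_of_enat (dp i (nat \<lfloor>s\<rfloor> + 1))"

lemma dp_interp_nat: "dp_interp i (real p) = ereal_of_enat (dp i p)"
proof -
  have "frac (real p) = 0" by simp
  then show ?thesis unfolding dp_interp_def
    by (simp del: frac_eq_0_iff add: zero_ereal_def[symmetric])
qed

lemma dp_interp_le_skip: assumes "i \<in> {1..m}" shows "dp_interp i s \<le> dp_interp (i + 1) s"
  unfolding dp_interp_def
  by (intro add_mono ereal_mult_left_mono)
    (simp_all add: dp_le_skip[OF assms, simplified] frac_lt_1 less_imp_le)

lemma dp_interp_real:
  assumes "dp i (nat \<lfloor>s\<rfloor>) \<noteq> \<infinity>" "0 < frac s \<Longrightarrow> dp i (nat \<lfloor>s\<rfloor> + 1) \<noteq> \<infinity>"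
  shows "dp_interp i s = ereal ((1 - frac s) * real_of_enat (dp i (nat \<lfloor>s\<rfloor>))
                                 + frac s * real_of_enat (dp i (nat \<lfloor>s\<rfloor> + 1)))"
proof (cases "frac s = 0")
  case True then show ?thesis
    unfolding dp_interp_def True using ereal_of_enat_eq_real_of_enat[OF assms(1)]
    by (simp add: zero_ereal_def[symmetric])
next
  case False
  then have "0 < frac s" by (simp add: less_le)
  then show ?thesis
    unfolding dp_interp_def using ereal_of_enat_eq_real_of_enat assms by simp
qed

lemma dp_interp_finite_D: assumes "dp_interp i s \<le> ereal X"
  shows "dp i (nat \<lfloor>s\<rfloor>) \<noteq> \<infinity>" "0 < frac s \<Longrightarrow> dp i (nat \<lfloor>s\<rfloor> + 1) \<noteq> \<infinity>"
    "(1 - frac s) * real_of_enat (dp i (nat \<lfloor>s\<rfloor>)) + frac s * real_of_enat (dp i (nat \<lfloor>s\<rfloor> + 1)) \<le> X"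
proof -
  have t: "0 \<le> frac s" "frac s < 1" by (simp_all add: frac_lt_1)
  have nonneg: "0 \<le> ereal (frac s) * ereal_of_enat (dp i (nat \<lfloor>s\<rfloor> + 1))"
    "0 \<le> ereal (1 - frac s) * ereal_of_enat (dp i (nat \<lfloor>s\<rfloor>))"
    using t by (simp_all add: ereal_of_enat_nonneg)
  show fin0: "dp i (nat \<lfloor>s\<rfloor>) \<noteq> \<infinity>"
  proof
    assume "dp i (nat \<lfloor>s\<rfloor>) = \<infinity>"
    then have "dp_interp i s = \<infinity>" unfolding dp_interp_def using t nonneg(1) by simp
    then show False using assms by simp
  qed
  show fin1: "dp i (nat \<lfloor>s\<rfloor> + 1) \<noteq> \<infinity>" if "0 < frac s"
  proof
    assume "dp i (nat \<lfloor>s\<rfloor> + 1) = \<infinity>"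
    then have "dp_interp i s = \<infinity>" unfolding dp_interp_def using that nonneg(2) by simp
    then show False using assms by simp
  qed
  show "(1 - frac s) * real_of_enat (dp i (nat \<lfloor>s\<rfloor>))
      + frac s * real_of_enat (dp i (nat \<lfloor>s\<rfloor> + 1)) \<le> X"
    using assms dp_interp_real[OF fin0 fin1] by simp
qed

definition cum_cost :: "nat \<Rightarrow> real \<Rightarrow> real" where
  "cum_cost i z = (\<Sum>k\<in>{1..n}. c_real i k * overlap k 0 z)"

lemma segment_cost_eq_cum_cost_diff: assumes "0 \<le> a" "a \<le> b"
  shows "(\<Sum>k\<in>{1..n}. c_real i k * overlap k a b) = cum_cost i b - cum_cost i a"
proof -
  have "\<forall>k. overlap k 0 b = overlap k 0 a + overlap k a b" using overlap_split[OF assms] by simp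
  then show ?thesis unfolding cum_cost_def by (simp add: algebra_simps sum.distrib)
qed

lemma overlap_affine: assumes "0 \<le> \<theta>" "\<theta> \<le> 1"
  shows "overlap k 0 (real t + \<theta>) = (1 - \<theta>) * overlap k 0 (real t) + \<theta> * overlap k 0 (real t + 1)"
proof -
  have le: "real (cum (k - 1)) \<le> real (cum k)" using cum_mono by simp
  have o: "overlap k 0 z = max 0 (min z (real (cum k)) - real (cum (k - 1)))" if "0 \<le> z" for z
    using that unfolding overlap_def by simp
  consider "t + 1 \<le> cum (k - 1)" | "cum k \<le> t" | "cum (k - 1) \<le> t" "t + 1 \<le> cum k" by linarith
  then show ?thesis
  proof cases
    case 1
    then have "real t + 1 \<le> real (cum (k - 1))" by linarith
    then show ?thesis using assms by (simp add: o max_def min_def)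
  next
    case 2
    then have "real (cum k) \<le> real t" by linarith
    then show ?thesis using assms le by (simp add: o max_def min_def algebra_simps)
  next
    case 3
    then have "real (cum (k - 1)) \<le> real t" "real t + 1 \<le> real (cum k)" by linarith+
    then show ?thesis using assms by (simp add: o max_def min_def algebra_simps)
  qed
qed

lemma cum_cost_affine: assumes "0 \<le> \<theta>" "\<theta> \<le> 1"
  shows "cum_cost i (real t + \<theta>) = (1 - \<theta>) * cum_cost i (real t) + \<theta> * cum_cost i (real t + 1)"
proof -
  have "cum_cost i (real t + \<theta>) = (\<Sum>k\<in>{1..n}. (1 - \<theta>) * (c_real i k * overlap k 0 (real t))
      + \<theta> * (c_real i k * overlap k 0 (real t + 1)))"
    unfolding cum_cost_def overlap_affine[OF assms] by (rule sum.cong) (simp_all add: algebra_simps)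
  then show ?thesis unfolding cum_cost_def by (simp only: sum.distrib sum_distrib_left)
qed

lemma overlap_nat_pos_imp_overlap_pos:
  assumes "0 < overlap_nat k a b" "nat \<lfloor>s\<rfloor> \<le> a" "real b < e + 1" "0 \<le> s" "s < e"
  shows "0 < overlap k s e"
proof -
  have h: "cum (k - 1) < b" "a < cum k" "cum (k - 1) < cum k" using assms(1)
    unfolding overlap_nat_def by auto
  have "real (cum (k - 1)) < e" using h(1) assms(3) by linarith
  moreover have "s < real (cum k)"
    using h(2) assms(2,4) nat_floor_add_frac[OF assms(4)] frac_lt_1[of s]
    by linarith
  ultimately show ?thesis using assms(5) h(3) unfolding overlap_def by (auto simp: max_def min_def)
qed

text \<open>Integer positions \<open>a \<le> b\<close> that bracket \<open>[s, e]\<close> from inside only use clients with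
  finite cost.\<close>

lemma dp_step_bound: assumes i: "i \<in> {1..m}" and ab: "a \<le> b" "b \<le> total" "b - a \<le> U i"
  and bracket: "nat \<lfloor>s\<rfloor> \<le> a" "real b < e + 1" "0 \<le> s" "s < e"
  and fin: "\<forall>k\<in>{1..n}. 0 < overlap k s e \<longrightarrow> c i k \<noteq> \<infinity>" "dp (i + 1) b \<noteq> \<infinity>"
  shows "dp i a \<noteq> \<infinity>"
    and "real_of_enat (dp i a) \<le> real (f i) + (cum_cost i b - cum_cost i a)
        + real_of_enat (dp (i + 1) b)"
proof -
  have "ereal_of_enat (dp i a)
      \<le> ereal (real (f i) + (cum_cost i b - cum_cost i a) + real_of_enat (dp (i + 1) b))"
  proof (cases "a = b")
    case True
    then have "ereal_of_enat (dp i a) \<le> ereal_of_enat (dp (i + 1) b)"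
      using dp_le_skip[OF i, of a] by simp
    also have "\<dots> = ereal (real_of_enat (dp (i + 1) b))"
      by (rule ereal_of_enat_eq_real_of_enat[OF fin(2)])
    also have "\<dots> \<le> ereal (real (f i) + (cum_cost i b - cum_cost i a) + real_of_enat (dp (i + 1) b))"
      using True by simp
    finally show ?thesis .
  next
    case False
    then have le: "dp i a \<le> enat (f i) + seg_cost i a b + dp (i + 1) b"
      using dp_le_open[OF i _ ab(2,3)] ab(1) by simp
    have "\<forall>k\<in>{1..n}. 0 < overlap_nat k a b \<longrightarrow> c i k \<noteq> \<infinity>"
      using fin(1) overlap_nat_pos_imp_overlap_pos[OF _ bracket] by blast
    then have "ereal_of_enat (seg_cost i a b) = ereal (cum_cost i b - cum_cost i a)"
      using seg_cost_real segment_cost_eq_cum_cost_diff[of "real a" "real b" i] ab(1) by simp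
    then show ?thesis using le ereal_of_enat_eq_real_of_enat[OF fin(2)]
      by (metis ereal_of_enat_add ereal_of_enat_le_iff ereal_of_enat_simps(1) plus_ereal.simps(1))
  qed
  then show "dp i a \<noteq> \<infinity>" by (cases "dp i a") auto
  then show "real_of_enat (dp i a) \<le> real (f i) + (cum_cost i b - cum_cost i a)
      + real_of_enat (dp (i + 1) b)"
    using \<open>ereal_of_enat (dp i a) \<le> _\<close> ereal_of_enat_eq_real_of_enat by fastforce
qed

lemma cum_cost_interp: assumes "0 \<le> s"
  shows "cum_cost i s = (1 - frac s) * cum_cost i (nat \<lfloor>s\<rfloor>) + frac s * cum_cost i (nat \<lfloor>s\<rfloor> + 1)"
  using cum_cost_affine[of "frac s" i "nat \<lfloor>s\<rfloor>"] nat_floor_add_frac[OF assms]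
  by (simp add: frac_lt_1 less_imp_le add.commute)

text \<open>The four transitions between the integer neighbours \<open>k, k + 1\<close> of \<open>s\<close> and \<open>k', k' + 1\<close>
  of \<open>e\<close> that the monotone coupling uses.\<close>

lemma dp_corner_bounds:
  assumes i: "i \<in> {1..m}" and se: "0 \<le> s" "s < e" "e \<le> real total" "e - s \<le> real (U i)"
    and fin: "\<forall>k\<in>{1..n}. 0 < overlap k s e \<longrightarrow> c i k \<noteq> \<infinity>"
    and s_split: "s = real k + \<theta>" "0 \<le> \<theta>" "\<theta> < 1"
    and e_split: "e = real k' + \<theta>'" "0 \<le> \<theta>'" "\<theta>' < 1"
    and after: "dp (i + 1) k' \<noteq> \<infinity>" "0 < \<theta>' \<Longrightarrow> dp (i + 1) (k' + 1) \<noteq> \<infinity>"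
  defines "q \<equiv> \<lambda>a. real_of_enat (dp i a)" and "r \<equiv> \<lambda>b. real_of_enat (dp (i + 1) b)"
    and "G \<equiv> cum_cost i"
  shows "dp i k \<noteq> \<infinity> \<and> q k \<le> real (f i) + (G k' - G k) + r k'"
    and "0 < \<theta>' \<Longrightarrow> dp i (k + 1) \<noteq> \<infinity> \<and> q (k + 1) \<le> real (f i) + (G (k' + 1) - G (k + 1)) + r (k' + 1)"
    and "\<theta>' < \<theta> \<Longrightarrow> dp i (k + 1) \<noteq> \<infinity> \<and> q (k + 1) \<le> real (f i) + (G k' - G (k + 1)) + r k'"
    and "\<theta> < \<theta>' \<Longrightarrow> q k \<le> real (f i) + (G (k' + 1) - G k) + r (k' + 1)"
proof -
  have "\<lfloor>s\<rfloor> = int k" using s_split by (simp add: floor_eq_iff)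
  then have floor_le: "nat \<lfloor>s\<rfloor> \<le> k" "nat \<lfloor>s\<rfloor> \<le> k + 1" by auto
  have kk: "k \<le> k'" and len: "k' - k \<le> U i" using s_split e_split se by linarith+
  have k'_total: "k' \<le> total" and k'1_total: "0 < \<theta>' \<Longrightarrow> k' + 1 \<le> total"
    using e_split se(3) by linarith+
  have below: "real k' < e + 1" "0 < \<theta>' \<Longrightarrow> real (k' + 1) < e + 1" using e_split by auto
  note step = dp_step_bound[OF i _ _ _ _ _ se(1,2) fin, folded q_def r_def G_def]
  show "dp i k \<noteq> \<infinity> \<and> q k \<le> real (f i) + (G k' - G k) + r k'"
    using step[OF kk k'_total len floor_le(1) below(1) after(1)] by (auto simp: q_def r_def)
  show "dp i (k + 1) \<noteq> \<infinity> \<and> q (k + 1) \<le> real (f i) + (G (k' + 1) - G (k + 1)) + r (k' + 1)"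
    if "0 < \<theta>'"
    using step[of "k + 1" "k' + 1", OF _ k'1_total[OF that] _ floor_le(2) below(2)[OF that]
        after(2)[OF that]] kk len by (auto simp: q_def r_def)
  show "dp i (k + 1) \<noteq> \<infinity> \<and> q (k + 1) \<le> real (f i) + (G k' - G (k + 1)) + r k'"
    if "\<theta>' < \<theta>"
  proof -
    have "k + 1 \<le> k'" using s_split e_split se(2) that by linarith
    then show ?thesis
      using step[OF _ k'_total _ floor_le(2) below(1) after(1)] len by (auto simp: q_def r_def)
  qed
  show "q k \<le> real (f i) + (G (k' + 1) - G k) + r (k' + 1)" if "\<theta> < \<theta>'"
  proof -
    have "k' + 1 - k \<le> U i" using s_split e_split se(4) that by linarith
    then show ?thesis
      using step[OF _ k'1_total _ floor_le(1) below(2) after(2)] kk s_split that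
      by (auto simp: q_def r_def)
  qed
qed

lemma dp_interp_step:
  assumes i: "i \<in> {1..m}" and se: "0 \<le> s" "s < e" "e \<le> real total" "e - s \<le> real (U i)"
    and fin: "\<forall>k\<in>{1..n}. 0 < overlap k s e \<longrightarrow> c i k \<noteq> \<infinity>"
    and after: "dp_interp (i + 1) e \<le> ereal X"
  shows "dp_interp i s \<le> ereal (real (f i) + (cum_cost i e - cum_cost i s) + X)"
proof -
  define k \<theta> k' \<theta>' where "k = nat \<lfloor>s\<rfloor>" and "\<theta> = frac s" and "k' = nat \<lfloor>e\<rfloor>" and "\<theta>' = frac e"
  have t: "0 \<le> \<theta>" "\<theta> < 1" "0 \<le> \<theta>'" "\<theta>' < 1" unfolding \<theta>_def \<theta>'_def by (simp_all add: frac_lt_1)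
  have split: "s = real k + \<theta>" "e = real k' + \<theta>'"
    using nat_floor_add_frac se(1,2) unfolding k_def \<theta>_def k'_def \<theta>'_def by auto
  note after_D = dp_interp_finite_D[OF after, folded k'_def \<theta>'_def]
  note corner = dp_corner_bounds[OF i se fin split(1) t(1,2) split(2) t(3,4) after_D(1,2)]
  define q0 q1 r0 r1 where "q0 = real_of_enat (dp i k)" and "q1 = real_of_enat (dp i (k + 1))"
    and "r0 = real_of_enat (dp (i + 1) k')" and "r1 = real_of_enat (dp (i + 1) (k' + 1))"
  have "(1 - \<theta>) * q0 + \<theta> * q1 \<le> real (f i)
      + (((1 - \<theta>') * cum_cost i k' + \<theta>' * cum_cost i (k' + 1))
        - ((1 - \<theta>) * cum_cost i k + \<theta> * cum_cost i (k + 1)))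
      + ((1 - \<theta>') * r0 + \<theta>' * r1)"
    using t corner unfolding q0_def q1_def r0_def r1_def by (intro convex_coupling_le) auto
  also have "\<dots> \<le> real (f i) + (cum_cost i e - cum_cost i s) + X"
    using cum_cost_interp[OF se(1), of i] cum_cost_interp[of e i] se after_D(3)
    unfolding k_def \<theta>_def k'_def \<theta>'_def r0_def r1_def by simp
  finally have "(1 - \<theta>) * q0 + \<theta> * q1 \<le> real (f i) + (cum_cost i e - cum_cost i s) + X" .
  moreover have "dp i (k + 1) \<noteq> \<infinity>" if "0 < \<theta>"
    using corner(2,3) that by (cases "\<theta>' < \<theta>") auto
  ultimately show ?thesis
    using dp_interp_real[of i s] corner(1) unfolding k_def \<theta>_def q0_def q1_def by simp
qed

lemma line_feasible_drop:
  assumes i: "i \<in> {1..m}" and feas: "line_feasible i s Fo y" and idle: "\<forall>k\<in>{1..n}. y i k = 0"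
  shows "line_feasible (i + 1) s (Fo - {i}) y"
    and "line_cost (i + 1) (Fo - {i}) y \<le> line_cost i Fo y"
proof -
  have split: "{i..m} = insert i {i + 1..m}" using i by auto
  show "line_feasible (i + 1) s (Fo - {i}) y"
    using feas idle unfolding line_feasible_def split by auto
  have "finite Fo" using feas unfolding line_feasible_def by (auto intro: finite_subset)
  then have "(\<Sum>a\<in>Fo - {i}. real (f a)) \<le> (\<Sum>a\<in>Fo. real (f a))" by (intro sum_mono2) auto
  then show "line_cost (i + 1) (Fo - {i}) y \<le> line_cost i Fo y"
    unfolding line_cost_def split using idle by simp
qed

text \<open>The induction step when facility \<open>i\<close> is used: after the exchange it serves the segment
  \<open>[s, s + flow y i]\<close>, and the later facilities serve the rest of the line.\<close>

lemma dp_interp_le_line_cost_open: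
  assumes i: "i \<in> {1..m}" and s: "0 \<le> s" "s \<le> real total" and feas: "line_feasible i s Fo y"
    and pos: "0 < flow y i"
    and after: "\<And>Fo' y'. line_feasible (i + 1) (s + flow y i) Fo' y' \<Longrightarrow>
      dp_interp (i + 1) (s + flow y i) \<le> ereal (line_cost (i + 1) Fo' y')"
  shows "dp_interp i s \<le> ereal (line_cost i Fo y)"
proof -
  note exch = i s feas pos
  obtain y' where feas': "line_feasible (i + 1) (s + flow y i) (Fo - {i}) y'"
    and cost': "(\<Sum>k\<in>{1..n}. c_real i k * overlap k s (s + flow y i))
        + (\<Sum>a\<in>{i + 1..m}. \<Sum>k\<in>{1..n}. c_real a k * y' a k)
      \<le> (\<Sum>a\<in>{i..m}. \<Sum>k\<in>{1..n}. c_real a k * y a k)"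
    using exchanged_solution[OF exch] by blast
  have fin: "\<forall>k\<in>{1..n}. 0 < overlap k s (s + flow y i) \<longrightarrow> c i k \<noteq> \<infinity>"
    using cost_finite_on_segment[OF exch] by blast
  have "dp_interp i s \<le> ereal (real (f i) + (cum_cost i (s + flow y i) - cum_cost i s)
      + line_cost (i + 1) (Fo - {i}) y')"
    by (rule dp_interp_step[OF i s(1) _ reach_le_total[OF exch] _ fin after[OF feas']])
      (use pos flow_le_capacity[OF exch] in auto)
  also have "\<dots> \<le> ereal (line_cost i Fo y)"
  proof -
    have "finite Fo" using feas unfolding line_feasible_def by (auto intro: finite_subset)
    then have "(\<Sum>a\<in>Fo. real (f a)) = real (f i) + (\<Sum>a\<in>Fo - {i}. real (f a))"
      using facility_opened[OF exch] by (simp add: sum.remove)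
    then show ?thesis
      using cost' segment_cost_eq_cum_cost_diff[of s "s + flow y i" i] s(1) pos
      unfolding line_cost_def by simp
  qed
  finally show ?thesis .
qed

lemma dp_interp_le_line_cost:
  "i \<in> {1..m + 1} \<Longrightarrow> 0 \<le> s \<Longrightarrow> s \<le> real total \<Longrightarrow> line_feasible i s Fo y \<Longrightarrow>
    dp_interp i s \<le> ereal (line_cost i Fo y)"
proof (induction "m + 1 - i" arbitrary: i s Fo y)
  case 0
  then have i: "i = m + 1" by auto
  then have "\<forall>k\<in>{1..n}. overlap k s (real total) = 0" "Fo = {}"
    using "0.prems"(4) unfolding line_feasible_def by auto
  then have "s = real total" "line_cost i Fo y = 0"
    using sum_overlap[of s "real total"] "0.prems"(2,3) i unfolding line_cost_def by auto
  then show ?case using dp_interp_nat[of i total] dp_total[of i] i by simp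
next
  case (Suc t)
  then have i: "i \<in> {1..m}" by auto
  have IH: "\<And>s' Fo' y'. 0 \<le> s' \<Longrightarrow> s' \<le> real total \<Longrightarrow> line_feasible (i + 1) s' Fo' y' \<Longrightarrow>
      dp_interp (i + 1) s' \<le> ereal (line_cost (i + 1) Fo' y')"
    using Suc i by auto
  note feas = Suc.prems(4) and s = Suc.prems(2,3)
  have "0 \<le> flow y i"
    unfolding flow_def using feas i by (intro sum_nonneg) (auto simp: line_feasible_def)
  then consider "flow y i = 0" | "0 < flow y i" by linarith
  then show ?case
  proof cases
    case 1
    moreover have "\<forall>k\<in>{1..n}. 0 \<le> y i k" using feas i unfolding line_feasible_def by auto
    ultimately have "\<forall>k\<in>{1..n}. y i k = 0"
      using sum_nonneg_eq_0_iff[of "{1..n}" "y i"] unfolding flow_def by auto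
    note drop = line_feasible_drop[OF i feas this]
    have "dp_interp i s \<le> dp_interp (i + 1) s" by (rule dp_interp_le_skip[OF i])
    also have "\<dots> \<le> ereal (line_cost (i + 1) (Fo - {i}) y)" by (rule IH[OF s drop(1)])
    also have "\<dots> \<le> ereal (line_cost i Fo y)" using drop(2) by simp
    finally show ?thesis .
  next
    case 2
    have "dp_interp (i + 1) (s + flow y i) \<le> ereal (line_cost (i + 1) Fo' y')"
      if "line_feasible (i + 1) (s + flow y i) Fo' y'" for Fo' y'
      using IH[OF _ reach_le_total[OF i s feas 2] that] s(1) 2 by simp
    then show ?thesis by (rule dp_interp_le_line_cost_open[OF i s feas 2])
  qed
qed

section \<open>Subinstances and the greedy recursion\<close>

lemma ereal_cost_times: assumes "0 \<le> v" "0 < v \<Longrightarrow> c a k \<noteq> \<infinity>"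
  shows "ereal_of_enat (c a k) * ereal v = ereal (c_real a k * v)"
proof (cases "c a k")
  case (enat x) then show ?thesis by simp
next
  case infinity then have "v = 0" using assms by force
  then show ?thesis by (simp add: zero_ereal_def[symmetric])
qed

context
  fixes j d :: nat
  assumes j: "j \<in> {1..n}" and d: "d \<le> dem j"
begin

lemma sub_clients_subset: "sub_clients n j d \<subseteq> {1..n}"
  using j unfolding sub_clients_def by auto

lemma sub_dem_pos: "k \<in> sub_clients n j d \<Longrightarrow> 0 < sub_dem dem j d k"
  using j dem_pos unfolding sub_clients_def sub_dem_def by auto

lemma start_le_total: "cum j - d \<le> total"
  using cum_mono[of j n] j by simp

text \<open>The subinstance is the segment \<open>[cum j - d, total]\<close> of the line.\<close>

lemma overlap_subinstance: assumes k: "k \<in> {1..n}"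
  shows "overlap k (real (cum j - d)) (real total) =
     (if k \<in> sub_clients n j d then real (sub_dem dem j d k) else 0)"
proof -
  have pj: "cum j = cum (j - 1) + dem j" using cum_pred j by simp
  have kD: "cum k \<le> total" using cum_mono k by simp
  have pk: "cum k = cum (k - 1) + dem k" using cum_pred k by simp
  consider "k < j" | "k = j" | "j < k" by linarith
  then show ?thesis
  proof cases
    case 1
    then have "cum k \<le> cum (j - 1)" using cum_mono by simp
    then have "real (cum k) \<le> real (cum j - d)" using pj d by linarith
    then show ?thesis using 1 unfolding overlap_def sub_clients_def by (auto simp: max_def min_def)
  next
    case 2
    have "real (cum (k - 1)) \<le> real (cum j - d)" "real (cum j - d) = real (cum k) - real d"
      using 2 pj d by (simp_all add: of_nat_diff)
    then show ?thesis using 2 kD k unfolding overlap_def sub_clients_def sub_dem_def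
      by (auto simp: max_def min_def)
  next
    case 3
    then have "cum j \<le> cum (k - 1)" using cum_mono by simp
    then have "real (cum j - d) \<le> real (cum (k - 1))" by linarith
    moreover have "real (cum k) = real (cum (k - 1)) + real (dem k)" using pk by simp
    ultimately show ?thesis using 3 kD k unfolding overlap_def sub_clients_def sub_dem_def
      by (auto simp: max_def min_def)
  qed
qed

abbreviation "cl \<equiv> sub_clients n j d"
abbreviation "sdem \<equiv> sub_dem dem j d"

lemma line_solution_of_cfl:
  assumes i: "i \<in> {1..m}" and feas: "cfl_feasible {i..m} cl sdem U Fo x"
    and fin: "cfl_cost {i..m} cl sdem f c Fo x \<noteq> \<infinity>"
  defines "y \<equiv> \<lambda>a k. if k \<in> cl then x a k * real (sdem k) else 0"
  shows "line_feasible i (real (cum j - d)) Fo y"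
    and "cfl_cost {i..m} cl sdem f c Fo x = ereal (line_cost i Fo y)"
proof -
  have F: "Fo \<subseteq> {i..m}" "\<forall>a\<in>{i..m}. \<forall>k\<in>cl. 0 \<le> x a k \<and> x a k \<le> 1"
    "\<forall>k\<in>cl. (\<Sum>a\<in>{i..m}. x a k) = 1" "\<forall>a\<in>{i..m}. (\<Sum>k\<in>cl. x a k * real (sdem k)) \<le> real (U a)"
    "\<forall>a\<in>{i..m}. \<forall>k\<in>cl. 0 < x a k \<longrightarrow> a \<in> Fo"
    using feas unfolding cfl_feasible_def by auto
  have finite_cl: "finite cl" using sub_clients_subset by (rule finite_subset) simp
  define T where "T a k = ereal_of_enat (c a k) * ereal (real (sdem k) * x a k)" for a k
  have cost: "cfl_cost {i..m} cl sdem f c Fo x = ereal (\<Sum>a\<in>Fo. real (f a))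
      + (\<Sum>a\<in>{i..m}. \<Sum>k\<in>cl. T a k)"
    unfolding cfl_cost_def T_def by simp
  then have "\<forall>a\<in>{i..m}. \<forall>k\<in>cl. T a k \<noteq> \<infinity>" using fin finite_cl by (auto simp: sum_Pinfty)
  then have cost_fin: "\<forall>a\<in>{i..m}. \<forall>k\<in>cl. 0 < x a k \<longrightarrow> c a k \<noteq> \<infinity>"
    using sub_dem_pos unfolding T_def by fastforce
  have row: "(\<Sum>k\<in>{1..n}. g k) = (\<Sum>k\<in>cl. g k)" if "\<forall>k. k \<notin> cl \<longrightarrow> g k = 0" for g :: "nat \<Rightarrow> real"
    by (rule sum.mono_neutral_right) (use sub_clients_subset that in auto)
  show "line_feasible i (real (cum j - d)) Fo y"
    unfolding line_feasible_def
  proof (intro conjI)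
    show "Fo \<subseteq> {i..m}" by (fact F(1))
    show "\<forall>a\<in>{i..m}. \<forall>k\<in>{1..n}. 0 \<le> y a k" using F(2) unfolding y_def by auto
    show "\<forall>k\<in>{1..n}. (\<Sum>a\<in>{i..m}. y a k) = overlap k (real (cum j - d)) (real total)"
      using F(3) overlap_subinstance unfolding y_def by (simp add: sum_distrib_right[symmetric])
    show "\<forall>a\<in>{i..m}. (\<Sum>k\<in>{1..n}. y a k) \<le> real (U a)"
      using F(4) row[of "y _"] unfolding y_def by auto
    show "\<forall>a\<in>{i..m}. \<forall>k\<in>{1..n}. 0 < y a k \<longrightarrow> a \<in> Fo \<and> c a k \<noteq> \<infinity>"
      using F(2,5) cost_fin unfolding y_def by (auto simp: zero_less_mult_iff)
  qed
  have "T a k = ereal (c_real a k * y a k)" if "a \<in> {i..m}" "k \<in> cl" for a k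
    unfolding T_def y_def using that F(2) cost_fin sub_dem_pos[of k]
    by (subst ereal_cost_times) (auto simp: zero_less_mult_iff ac_simps)
  then have "(\<Sum>a\<in>{i..m}. \<Sum>k\<in>cl. T a k) = ereal (\<Sum>a\<in>{i..m}. \<Sum>k\<in>{1..n}. c_real a k * y a k)"
    using row[of "\<lambda>k. c_real _ k * y _ k"] unfolding y_def by simp
  then show "cfl_cost {i..m} cl sdem f c Fo x = ereal (line_cost i Fo y)"
    using cost unfolding line_cost_def by simp
qed

lemma line_column_subinstance:
  assumes "line_feasible i (real (cum j - d)) Fo y" "k \<in> {1..n}"
  shows "(\<Sum>a\<in>{i..m}. y a k) = (if k \<in> cl then real (sdem k) else 0)"
  using assms overlap_subinstance unfolding line_feasible_def by simp

lemma line_flow_outside: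
  assumes feas: "line_feasible i (real (cum j - d)) Fo y" and "a \<in> {i..m}" "k \<in> {1..n}" "k \<notin> cl"
  shows "y a k = 0"
  using line_column_subinstance[OF feas, of k] assms feas
    sum_nonneg_eq_0_iff[of "{i..m}" "\<lambda>a. y a k"] unfolding line_feasible_def by auto

lemma line_flow_le_sub_dem:
  assumes feas: "line_feasible i (real (cum j - d)) Fo y" and a: "a \<in> {i..m}" and k: "k \<in> cl"
  shows "y a k \<le> real (sdem k)"
proof -
  have "k \<in> {1..n}" using k sub_clients_subset by auto
  then have "y a k \<le> (\<Sum>a\<in>{i..m}. y a k)"
    by (intro member_le_sum) (use a feas in \<open>auto simp: line_feasible_def\<close>)
  then show ?thesis using line_column_subinstance[OF feas \<open>k \<in> {1..n}\<close>] k by simp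
qed

lemma cfl_solution_of_line:
  assumes i: "i \<in> {1..m}" and feas: "line_feasible i (real (cum j - d)) Fo y"
  defines "x \<equiv> \<lambda>a k. y a k / real (sdem k)"
  shows "cfl_feasible {i..m} cl sdem U Fo x"
    and "cfl_cost {i..m} cl sdem f c Fo x = ereal (line_cost i Fo y)"
proof -
  have F: "Fo \<subseteq> {i..m}" "\<forall>a\<in>{i..m}. \<forall>k\<in>{1..n}. 0 \<le> y a k"
    "\<forall>a\<in>{i..m}. (\<Sum>k\<in>{1..n}. y a k) \<le> real (U a)"
    "\<forall>a\<in>{i..m}. \<forall>k\<in>{1..n}. 0 < y a k \<longrightarrow> a \<in> Fo \<and> c a k \<noteq> \<infinity>"
    using feas unfolding line_feasible_def by auto
  have y_eq: "real (sdem k) * x a k = y a k" if "k \<in> cl" for a k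
    unfolding x_def using sub_dem_pos[OF that] by simp
  show "cfl_feasible {i..m} cl sdem U Fo x"
    unfolding cfl_feasible_def
  proof (intro conjI)
    show "Fo \<subseteq> {i..m}" by (fact F(1))
    show "\<forall>a\<in>{i..m}. \<forall>k\<in>cl. 0 \<le> x a k \<and> x a k \<le> 1"
      using F(2) line_flow_le_sub_dem[OF feas] sub_dem_pos sub_clients_subset unfolding x_def
      by (auto simp: divide_le_eq_1)
    show "\<forall>k\<in>cl. (\<Sum>a\<in>{i..m}. x a k) = 1"
      using line_column_subinstance[OF feas] sub_dem_pos sub_clients_subset unfolding x_def
      by (auto simp: sum_divide_distrib[symmetric])
    show "\<forall>a\<in>{i..m}. (\<Sum>k\<in>cl. x a k * real (sdem k)) \<le> real (U a)"
    proof
      fix a assume a: "a \<in> {i..m}"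
      have "(\<Sum>k\<in>cl. x a k * real (sdem k)) = (\<Sum>k\<in>cl. y a k)"
        using y_eq by (simp add: mult.commute)
      also have "\<dots> \<le> (\<Sum>k\<in>{1..n}. y a k)"
        by (rule sum_mono2) (use sub_clients_subset F(2) a in auto)
      finally show "(\<Sum>k\<in>cl. x a k * real (sdem k)) \<le> real (U a)" using F(3) a by (meson order_trans)
    qed
    show "\<forall>a\<in>{i..m}. \<forall>k\<in>cl. 0 < x a k \<longrightarrow> a \<in> Fo"
      using F(4) sub_dem_pos sub_clients_subset unfolding x_def by (auto simp: zero_less_divide_iff)
  qed
  have "ereal_of_enat (c a k) * ereal (real (sdem k) * x a k) = ereal (c_real a k * y a k)"
    if "a \<in> {i..m}" "k \<in> cl" for a k
    using y_eq[OF that(2)] ereal_cost_times[of "y a k" a k] F(2,4) that sub_clients_subset by auto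
  moreover have "(\<Sum>k\<in>{1..n}. c_real a k * y a k) = (\<Sum>k\<in>cl. c_real a k * y a k)"
    if "a \<in> {i..m}" for a
    by (rule sum.mono_neutral_right)
      (use sub_clients_subset line_flow_outside[OF feas] that in auto)
  ultimately show "cfl_cost {i..m} cl sdem f c Fo x = ereal (line_cost i Fo y)"
    unfolding cfl_cost_def line_cost_def by simp
qed

lemma sub_opt_eq_dp: assumes i: "i \<in> {1..m}"
  shows "sub_opt m n dem f U c i j d = ereal_of_enat (dp i (cum j - d))"
proof (rule antisym)
  have i1: "i \<in> {1..m + 1}" using i by simp
  show "sub_opt m n dem f U c i j d \<le> ereal_of_enat (dp i (cum j - d))"
  proof (cases "dp i (cum j - d) = \<infinity>")
    case False
    then obtain Fo y where feas: "line_feasible i (real (cum j - d)) Fo y"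
      and cost: "ereal_of_enat (dp i (cum j - d)) = ereal (line_cost i Fo y)"
      using dp_attained[OF i1 start_le_total] by blast
    note cfl = cfl_solution_of_line[OF i feas]
    have "ereal (line_cost i Fo y) \<in> {cfl_cost {i..m} cl sdem f c Fo x
        | Fo x. cfl_feasible {i..m} cl sdem U Fo x}"
      using cfl by (metis (mono_tags, lifting) mem_Collect_eq)
    then show ?thesis unfolding sub_opt_def cfl_opt_def cost by (rule Inf_lower)
  qed simp
  show "ereal_of_enat (dp i (cum j - d)) \<le> sub_opt m n dem f U c i j d"
    unfolding sub_opt_def cfl_opt_def
  proof (rule Inf_greatest, safe)
    fix Fo x assume feas: "cfl_feasible {i..m} cl sdem U Fo x"
    show "ereal_of_enat (dp i (cum j - d)) \<le> cfl_cost {i..m} cl sdem f c Fo x"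
    proof (cases "cfl_cost {i..m} cl sdem f c Fo x = \<infinity>")
      case False
      define y where "y a k = (if k \<in> cl then x a k * real (sdem k) else 0)" for a k
      note line = line_solution_of_cfl[OF i feas False, folded y_def]
      have "dp_interp i (real (cum j - d)) \<le> ereal (line_cost i Fo y)"
        by (rule dp_interp_le_line_cost[OF i1 _ _ line(1)]) (use start_le_total in auto)
      then show ?thesis using line(2) dp_interp_nat by simp
    qed simp
  qed
qed

lemma start_bounds: "cum (j - 1) \<le> cum j - d" "cum j - d \<le> cum j" "d = cum j - (cum j - d)"
  using cum_pred[of j] j d by auto

lemma served_prefix: "j \<le> l \<Longrightarrow> d + (\<Sum>k\<in>{Suc j..l}. dem k) = cum l - (cum j - d)"
  using cum_split[of j l] start_bounds by simp

lemma rest_eq: "rest n dem j d = total - (cum j - d)"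
  using cum_split[of j n] start_bounds j unfolding rest_def by auto

context
  fixes u :: nat
  assumes u: "1 \<le> u" "u \<le> total - (cum j - d)"
begin

abbreviation "stop \<equiv> cum j - d + u"
abbreviation "nc \<equiv> NC n dem u j d"
abbreviation "dr \<equiv> DR n dem u j d"

lemma stop_le_total: "stop \<le> total"
  using u start_le_total by simp

lemma crossing_iff: "j \<le> l \<Longrightarrow> l \<le> n \<Longrightarrow> u < d + (\<Sum>k\<in>{Suc j..l}. dem k) \<longleftrightarrow> stop < cum l"
  using served_prefix[of l] cum_mono[of j l] start_bounds by auto

lemma nc_crossing: "j \<le> nc" "n < nc \<or> u < d + (\<Sum>k\<in>{Suc j..nc}. dem k)"
  and nc_least: "j \<le> l \<Longrightarrow> n < l \<or> u < d + (\<Sum>k\<in>{Suc j..l}. dem k) \<Longrightarrow> nc \<le> l"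
proof -
  have "j \<le> n + 1 \<and> (n < n + 1 \<or> u < d + (\<Sum>k\<in>{Suc j..n + 1}. dem k))" using j by auto
  then have "j \<le> nc \<and> (n < nc \<or> u < d + (\<Sum>k\<in>{Suc j..nc}. dem k))"
    unfolding NC_def by (rule LeastI)
  then show "j \<le> nc" "n < nc \<or> u < d + (\<Sum>k\<in>{Suc j..nc}. dem k)" by auto
  show "j \<le> l \<Longrightarrow> n < l \<or> u < d + (\<Sum>k\<in>{Suc j..l}. dem k) \<Longrightarrow> nc \<le> l"
    unfolding NC_def by (rule Least_le) simp
qed

lemma nc_le: "nc \<le> n + 1"
  using nc_least[of "n + 1"] j by auto

lemma nc_inside: assumes "nc \<le> n" shows "stop < cum nc" "cum (nc - 1) \<le> stop"
proof -
  show "stop < cum nc" using crossing_iff[OF nc_crossing(1) assms] nc_crossing(2) assms by simp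
  show "cum (nc - 1) \<le> stop"
  proof (cases "nc = j")
    case True then show ?thesis using start_bounds by simp
  next
    case False
    then have "j \<le> nc - 1" "nc - 1 \<le> n" using nc_crossing(1) assms by auto
    moreover have "\<not> nc \<le> nc - 1" using False nc_crossing(1) by auto
    then have "\<not> (u < d + (\<Sum>k\<in>{Suc j..nc - 1}. dem k))"
      using nc_least[of "nc - 1"] \<open>j \<le> nc - 1\<close> \<open>nc - 1 \<le> n\<close> by auto
    ultimately show ?thesis using crossing_iff by auto
  qed
qed

lemma nc_outside: assumes "n < nc" shows "nc = n + 1" "stop = total"
proof -
  show "nc = n + 1" using nc_le assms by simp
  have "\<not> (u < d + (\<Sum>k\<in>{Suc j..n}. dem k))" using nc_least[of n] assms j by auto
  then show "stop = total" using crossing_iff[of n] j stop_le_total by auto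
qed

lemma DR_eq: "dr = (if nc \<le> n then cum nc - stop else 0)"
proof -
  have DR: "dr = (if nc = j then d - u
       else if nc \<le> n then dem nc - (u - (d + (\<Sum>k\<in>{Suc j..nc - 1}. dem k))) else 0)"
    unfolding DR_def by (simp add: Let_def)
  show ?thesis
  proof (cases "nc = j")
    case True
    then show ?thesis using DR nc_inside j start_bounds by auto
  next
    case False
    show ?thesis
    proof (cases "nc \<le> n")
      case True
      have "j \<le> nc - 1" using nc_crossing(1) False by simp
      then have "cum j \<le> cum (nc - 1)" using cum_mono by simp
      then have S: "cum j - d \<le> cum (nc - 1)" by simp
      have "cum nc = cum (nc - 1) + dem nc" using cum_pred nc_crossing(1) j by simp
      moreover have "d + (\<Sum>k\<in>{Suc j..nc - 1}. dem k) = cum (nc - 1) - (cum j - d)"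
        using served_prefix \<open>j \<le> nc - 1\<close> by blast
      moreover have "D - (u - (A - S)) = A + D - (S + u)" if "S \<le> A" "A \<le> S + u" "S + u < A + D"
        for A S D :: nat
        using that by arith
      ultimately show ?thesis using DR False True nc_inside[OF True] S by simp
    qed (use DR False in simp)
  qed
qed

lemma overlap_nat_greedy: assumes k: "k \<in> {1..n}"
  shows "overlap_nat k (cum j - d) stop =
    (if k < j \<or> nc < k then 0 else if nc = j then d - dr else if k = j then d
     else if k < nc then dem k else dem nc - dr)"
proof -
  have cum_k: "cum k = cum (k - 1) + dem k" using cum_pred k by simp
  have inside: "cum (nc - 1) \<le> stop" "stop < cum nc" if "nc \<le> n" using nc_inside that by auto
  consider "k < j" | "nc < k" | "k = j" "nc = j" | "k = j" "j < nc"
    | "j < k" "k < nc" | "j < k" "k = nc"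
    using nc_crossing(1) by linarith
  then show ?thesis
  proof cases
    case 1
    then have "cum k \<le> cum (j - 1)" using cum_mono by simp
    then show ?thesis using 1 start_bounds unfolding overlap_nat_def by simp
  next
    case 2
    then have "cum nc \<le> cum (k - 1)" "nc \<le> n" using cum_mono k by auto
    then show ?thesis using 2 inside unfolding overlap_nat_def by simp
  next
    case 3
    then show ?thesis using inside DR_eq start_bounds j unfolding overlap_nat_def by auto
  next
    case 4
    then have "cum j \<le> cum (nc - 1)" using cum_mono by simp
    moreover have "cum nc \<le> total \<or> n < nc" using cum_mono by (cases "nc \<le> n") auto
    ultimately show ?thesis using 4 inside nc_outside start_bounds unfolding overlap_nat_def
      by (cases "nc \<le> n") auto
  next
    case 5
    then have "cum k \<le> cum (nc - 1)" "cum j \<le> cum (k - 1)" using cum_mono by auto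
    moreover have "cum (nc - 1) \<le> stop" using inside nc_outside 5 by (cases "nc \<le> n") auto
    ultimately have "min stop (cum k) = cum k" "max (cum j - d) (cum (k - 1)) = cum (k - 1)"
      by (simp_all add: min_def max_def)
    then show ?thesis using 5 cum_k unfolding overlap_nat_def by simp
  next
    case 6
    then have "cum j \<le> cum (nc - 1)" "nc \<le> n" using cum_mono k by auto
    moreover have "cum nc = cum (nc - 1) + dem nc" using cum_pred 6 j by simp
    moreover have "max (cum j - d) (cum (nc - 1)) = cum (nc - 1)"
      using \<open>cum j \<le> cum (nc - 1)\<close> by (simp add: max_def)
    moreover have "min stop (cum nc) = stop" using inside \<open>nc \<le> n\<close> by simp
    ultimately have "overlap_nat k (cum j - d) stop = dem nc - dr"
      using 6 inside DR_eq unfolding overlap_nat_def by (simp only:) simp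
    then show ?thesis using 6 by simp
  qed
qed

lemma TC_eq_seg_cost: "TC n dem c i u j d = seg_cost i (cum j - d) stop"
proof -
  have TC: "TC n dem c i u j d = (if nc = j then c i j * enat (d - dr)
     else c i j * enat d + (\<Sum>k\<in>{Suc j..nc - 1}. c i k * enat (dem k))
          + (if nc \<le> n then c i nc * enat (dem nc - dr) else 0))"
    unfolding TC_def by (simp add: Let_def)
  have zero: "c i k * enat 0 = 0" for k by (simp add: zero_enat_def[symmetric])
  show ?thesis
  proof (cases "nc = j")
    case True
    have "seg_cost i (cum j - d) stop = (\<Sum>k\<in>{1..n}. if k = j then c i j * enat (d - dr) else 0)"
      unfolding seg_cost_def using True zero by (intro sum.cong) (auto simp: overlap_nat_greedy)
    then show ?thesis using TC True j by simp
  next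
    case False
    then have jn: "j < nc" using nc_crossing(1) by simp
    have "seg_cost i (cum j - d) stop = (\<Sum>k\<in>{1..n}. (if k = j then c i j * enat d else 0)
        + (if k \<in> {Suc j..nc - 1} then c i k * enat (dem k) else 0)
        + (if k = nc then c i nc * enat (dem nc - dr) else 0))"
      unfolding seg_cost_def using jn zero by (intro sum.cong) (auto simp: overlap_nat_greedy)
    also have "\<dots> = c i j * enat d + (\<Sum>k\<in>{Suc j..nc - 1}. c i k * enat (dem k))
        + (if nc \<le> n then c i nc * enat (dem nc - dr) else 0)"
    proof -
      have "{1..n} \<inter> {Suc j..nc - 1} = {Suc j..nc - 1}" using nc_le by auto
      moreover have "(\<Sum>k\<in>{1..n}. if k \<in> {Suc j..nc - 1} then c i k * enat (dem k) else 0)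
          = (\<Sum>k\<in>{1..n} \<inter> {Suc j..nc - 1}. c i k * enat (dem k))"
        by (rule sum.inter_restrict[symmetric]) simp
      ultimately have "(\<Sum>k\<in>{1..n}. if k \<in> {Suc j..nc - 1} then c i k * enat (dem k) else 0)
          = (\<Sum>k\<in>{Suc j..nc - 1}. c i k * enat (dem k))"
        by (simp only:)
      moreover have "nc \<in> {1..n} \<longleftrightarrow> nc \<le> n" using jn j by auto
      ultimately show ?thesis using j by (simp add: sum.distrib)
    qed
    finally show ?thesis using TC False by simp
  qed
qed

lemma NC_DR_cases:
  "(nc \<in> {1..n} \<and> dr \<le> dem nc \<and> cum nc - dr = stop) \<or> (nc = n + 1 \<and> dr = 0 \<and> stop = total)"
proof (cases "nc \<le> n")
  case True
  have "cum nc = cum (nc - 1) + dem nc" using cum_pred nc_crossing(1) j by simp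
  then have "cum nc - stop \<le> dem nc" "cum nc - (cum nc - stop) = stop"
    using nc_inside[OF True] by arith+
  then show ?thesis using True DR_eq nc_crossing(1) j by auto
next
  case False
  then show ?thesis using nc_outside DR_eq by simp
qed


lemma greedy_step_eq:
  assumes "i + 1 \<in> {1..m + 1}" "C (i + 1) (n + 1) 0 = 0"
    and "\<forall>j'\<in>{1..n}. \<forall>d'\<le>dem j'. C (i + 1) j' d' = dp (i + 1) (cum j' - d')"
  shows "TC n dem c i u j d + C (i + 1) nc dr = seg_cost i (cum j - d) stop + dp (i + 1) stop"
  using NC_DR_cases assms dp_total TC_eq_seg_cost by auto

end

end

lemma C_eq_dp:
  fixes C :: "nat \<Rightarrow> nat \<Rightarrow> nat \<Rightarrow> enat"
  assumes base_inf: "\<forall>j\<in>{1..n}. \<forall>d\<le>dem j. 0 < rest n dem j d \<longrightarrow> C (m + 1) j d = \<infinity>"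
    and base_zero: "\<forall>j\<in>{1..n}. \<forall>d\<le>dem j. rest n dem j d = 0 \<longrightarrow> C (m + 1) j d = 0"
    and base_end: "\<forall>i\<in>{1..m + 1}. C i (n + 1) 0 = 0"
    and recur: "\<forall>i\<in>{1..m}. \<forall>j\<in>{1..n}. \<forall>d\<le>dem j.
       C i j d = min (C (i + 1) j d)
         (enat (f i) + (INF u\<in>{1..min (U i) (rest n dem j d)}.
             TC n dem c i u j d + C (i + 1) (NC n dem u j d) (DR n dem u j d)))"
  shows "i \<in> {1..m + 1} \<Longrightarrow> \<forall>j\<in>{1..n}. \<forall>d\<le>dem j. C i j d = dp i (cum j - d)"
proof (induction "m + 1 - i" arbitrary: i)
  case 0
  then have "i = m + 1" by auto
  then show ?case using base_inf base_zero dp_base rest_eq by auto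
next
  case (Suc t)
  then have i: "i \<in> {1..m}" by auto
  have IH: "\<forall>j\<in>{1..n}. \<forall>d\<le>dem j. C (i + 1) j d = dp (i + 1) (cum j - d)"
    using Suc i by auto
  show ?case
  proof (intro ballI allI impI)
    fix j d assume j: "j \<in> {1..n}" and d: "d \<le> dem j"
    have "TC n dem c i u j d + C (i + 1) (NC n dem u j d) (DR n dem u j d)
        = seg_cost i (cum j - d) (cum j - d + u) + dp (i + 1) (cum j - d + u)"
      if "u \<in> {1..min (U i) (total - (cum j - d))}" for u
      using greedy_step_eq[of j d u i C] that j d i base_end IH by auto
    then have "(INF u\<in>{1..min (U i) (rest n dem j d)}.
          TC n dem c i u j d + C (i + 1) (NC n dem u j d) (DR n dem u j d))
        = (INF u\<in>{1..min (U i) (total - (cum j - d))}.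
          seg_cost i (cum j - d) (cum j - d + u) + dp (i + 1) (cum j - d + u))"
      by (simp add: rest_eq[OF j d])
    then show "C i j d = dp i (cum j - d)"
      using recur i j d IH dp_rec[OF i, of "cum j - d"] by simp
  qed
qed

end

theorem theorem1:
  fixes m n :: nat
    and f U dem :: "nat \<Rightarrow> nat"
    and c :: "nat \<Rightarrow> nat \<Rightarrow> enat"
    and C :: "nat \<Rightarrow> nat \<Rightarrow> nat \<Rightarrow> enat"
  assumes dem_pos: "\<forall>j\<in>{1..n}. 0 < dem j"
    and monge: "\<forall>h i j k. 1 \<le> h \<and> h < i \<and> i \<le> m \<and> 1 \<le> j \<and> j < k \<and> k \<le> n
                   \<longrightarrow> c h j + c i k \<le> c h k + c i j"
    and base_inf: "\<forall>j\<in>{1..n}. \<forall>d\<le>dem j. 0 < rest n dem j d \<longrightarrow> C (m + 1) j d = \<infinity>"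
    and base_zero: "\<forall>j\<in>{1..n}. \<forall>d\<le>dem j. rest n dem j d = 0 \<longrightarrow> C (m + 1) j d = 0"
    and base_end: "\<forall>i\<in>{1..m + 1}. C i (n + 1) 0 = 0"
    and recur: "\<forall>i\<in>{1..m}. \<forall>j\<in>{1..n}. \<forall>d\<le>dem j.
       C i j d = min (C (i + 1) j d)
         (enat (f i) + (INF u\<in>{1..min (U i) (rest n dem j d)}.
             TC n dem c i u j d + C (i + 1) (NC n dem u j d) (DR n dem u j d)))"
  shows "\<forall>i\<in>{1..m}. \<forall>j\<in>{1..n}. \<forall>d\<le>dem j.
           ereal_of_enat (C i j d) = sub_opt m n dem f U c i j d"
proof -
  interpret monge_cfl m n f U dem c
    by unfold_locales (fact dem_pos monge)+
  show ?thesis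
  proof (intro ballI allI impI)
    fix i j d assume i: "i \<in> {1..m}" and j: "j \<in> {1..n}" and d: "d \<le> dem j"
    have "C i j d = dp i (cum j - d)"
      using C_eq_dp[OF base_inf base_zero base_end recur, of i] i j d by simp
    then show "ereal_of_enat (C i j d) = sub_opt m n dem f U c i j d"
      using sub_opt_eq_dp[OF j d i] by simp
  qed
qed

end
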